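(* Let $\Omega=(0,1)$, $a\in L^\infty(\Omega)$ with $0<\alpha\le a(x)\le\beta$, and let $u\in H^1(\Omega)$ be the solution of the variational problem $B(u,v)=F(v)$ for the model problem $-(au')'=f$ on $\Omega$, where it is a priori known that $u(0)=0$. Let the uniform mesh, hat functions $N_i$, patches $\omega_i$, patch interpolants $I_{\omega_i}$, spaces $\overline{V}_i$ and sets $\mathcal{T}_1,\mathcal{T}_2$ be as in the context. Suppose that for each $x_i\in\mathcal{T}_2$ there exist $\bar{\xi}^i\in\overline{V}_i$, $\epsilon_i\ge 0$, and a constant $C_1>0$ independent of $i$, such that \[ \|u-I_{\omega_i}u-\bar{\xi}^i\|_{L^2(\omega_i)}\le C_1\,\mathrm{diam}(\omega_i)\,\|u-I_{\omega_i}u-\bar{\xi}^i\|_{\mathcal{E}(\omega_i)} \quad\text{and}\quad \|u-I_{\omega_i}u-\bar{\xi}^i\|_{\mathcal{E}(\omega_i)}\le\epsilon_i . \] Then there exists $v\in\mathcal{S}=\mathcal{S}_1+\overline{\mathcal{S}}_2$ such that \[ \|u-v\|_{\mathcal{E}(\Omega)}\le C\Big\{\sum_{x_i\in\mathcal{T}\setminus\mathcal{T}_2}\|u-I_{\omega_i}u\|^2_{\mathcal{E}(\omega_i)}+\sum_{x_i\in\mathcal{T}_2}\epsilon_i^2\Big\}^{1/2}, \] where $C$ is a constant independent of $h$ and of the $\epsilon_i$.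
   Context: Energy norm: for an open set $\omega\subset\Omega$, $\|v\|_{\mathcal{E}(\omega)}=\big(\int_\omega a|v'|^2\,dx\big)^{1/2}$; $B(u,v)=\int_\Omega a u'v'\,dx$. Mesh: $h=1/N$, vertices $x_k=kh$, $k=0,\dots,N$, set of vertices $\mathcal{T}=\{x_0,\dots,x_N\}$, elements $\tau_k=[x_{k-1},x_k]$, $k=1,\dots,N$. $N_i$ is the continuous piecewise linear hat function with $N_i(x_j)=\delta_{ij}$ (so $\{N_i\}$ is a partition of unity); the patch is $\omega_i=(x_{i-1},x_{i+1})$ for $1\le i\le N-1$, $\omega_0=(x_0,x_1)$, $\omega_N=(x_{N-1},x_N)$; the vertices of $\omega_i$ are $x_{i-1},x_i,x_{i+1}$ (resp. $x_0,x_1$ and $x_{N-1},x_N$). For $w\in H^1(\omega_i)$, $I_{\omega_i}w=\sum_k w(x_k)N_k|_{\omega_i}$, the sum over the vertices $x_k$ of $\omega_i$ (piecewise linear interpolant on the patch). For each $x_i\in\mathcal{T}$ a local space $V_i=\mathrm{span}\{\phi^i_j\}_{j=0}^{n_i}\subset H^1(\omega_i)$ is given, and $\overline{V}_i=\mathrm{span}\{\bar\phi^i_j\}_{j=1}^{n_i}$ with $\bar\phi^i_j=\phi^i_j-I_{\omega_i}\phi^i_j$. $\mathcal{T}_1=\{x_i:1\le i\le N\}$, $\mathcal{T}_2=\{x_i\in\mathcal{T}:\overline{V}_i\neq\{0\}\}$. $\mathcal{S}_1=\{\sum_{x_i\in\mathcal{T}_1}a_iN_i: a_i\in\mathbb{R}\}$,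 $\overline{\mathcal{S}}_2=\{\sum_{x_i\in\mathcal{T}_2}N_i\bar\xi^i:\bar\xi^i\in\overline{V}_i\}$ (each $N_i\bar\xi^i$ extended by zero outside $\omega_i$). *)

theory Defs
  imports "HOL-Analysis.Analysis"
begin

text \<open>w is in H^1 on the interval (c,d) with weak derivative w' (continuous representative):
  w' is square integrable and w is the indefinite integral of w'.\<close>
definition H1_on :: "real \<Rightarrow> real \<Rightarrow> (real \<Rightarrow> real) \<Rightarrow> (real \<Rightarrow> real) \<Rightarrow> bool" where
  "H1_on c d w w' \<longleftrightarrow> c < d \<and> w' absolutely_integrable_on {c..d}
     \<and> (\<lambda>x. (w' x)^2) integrable_on {c..d}
     \<and> (\<forall>x\<in>{c..d}. w x = w c + integral {c..x} w')"

definition wderiv :: "real \<Rightarrow> real \<Rightarrow> (real \<Rightarrow> real) \<Rightarrow> real \<Rightarrow> real" where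
  "wderiv c d w = (SOME g. H1_on c d w g)"

definition energy_norm :: "(real \<Rightarrow> real) \<Rightarrow> real \<Rightarrow> real \<Rightarrow> (real \<Rightarrow> real) \<Rightarrow> real" where
  "energy_norm a c d w = sqrt (integral {c..d} (\<lambda>x. a x * (wderiv c d w x)^2))"

definition L2_norm :: "real \<Rightarrow> real \<Rightarrow> (real \<Rightarrow> real) \<Rightarrow> real" where
  "L2_norm c d w = sqrt (integral {c..d} (\<lambda>x. (w x)^2))"

definition node :: "nat \<Rightarrow> nat \<Rightarrow> real" where
  "node N k = real k / real N"

definition hat :: "nat \<Rightarrow> nat \<Rightarrow> real \<Rightarrow> real" where
  "hat N k x = max 0 (1 - \<bar>real N * x - real k\<bar>)"

definition patch_l :: "nat \<Rightarrow> nat \<Rightarrow> real" where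
  "patch_l N i = (if i = 0 then 0 else node N (i - 1))"

definition patch_r :: "nat \<Rightarrow> nat \<Rightarrow> real" where
  "patch_r N i = (if i = N then 1 else node N (i + 1))"

definition patch_vertices :: "nat \<Rightarrow> nat \<Rightarrow> nat set" where
  "patch_vertices N i = {k. k \<le> N \<and> i \<le> k + 1 \<and> k \<le> i + 1}"

definition patch_interp :: "nat \<Rightarrow> nat \<Rightarrow> (real \<Rightarrow> real) \<Rightarrow> real \<Rightarrow> real" where
  "patch_interp N i w x = (\<Sum>k\<in>patch_vertices N i. w (node N k) * hat N k x)"

text \<open>overline V_i = span of phi^i_j - I_{omega_i} phi^i_j, j = 1..n_i, as functions on omega_i
  (values outside the patch are irrelevant).\<close>
definition Vbar :: "nat \<Rightarrow> (nat \<Rightarrow> nat \<Rightarrow> real \<Rightarrow> real) \<Rightarrow> (nat \<Rightarrow> nat) \<Rightarrow> nat \<Rightarrow> (real \<Rightarrow> real) set" where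
  "Vbar N \<phi> n i = {\<xi>. \<exists>c::nat \<Rightarrow> real. \<forall>x\<in>{patch_l N i..patch_r N i}.
      \<xi> x = (\<Sum>j\<in>{1..n i}. c j * (\<phi> i j x - patch_interp N i (\<phi> i j) x))}"

definition T2 :: "nat \<Rightarrow> (nat \<Rightarrow> nat \<Rightarrow> real \<Rightarrow> real) \<Rightarrow> (nat \<Rightarrow> nat) \<Rightarrow> nat set" where
  "T2 N \<phi> n = {i. i \<le> N \<and> (\<exists>\<xi>\<in>Vbar N \<phi> n i. \<exists>x\<in>{patch_l N i<..<patch_r N i}. \<xi> x \<noteq> 0)}"

definition in_S :: "nat \<Rightarrow> (nat \<Rightarrow> nat \<Rightarrow> real \<Rightarrow> real) \<Rightarrow> (nat \<Rightarrow> nat) \<Rightarrow> (real \<Rightarrow> real) \<Rightarrow> bool" where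
  "in_S N \<phi> n v \<longleftrightarrow> (\<exists>(b::nat \<Rightarrow> real) (\<xi>::nat \<Rightarrow> real \<Rightarrow> real).
      (\<forall>i\<in>T2 N \<phi> n. \<xi> i \<in> Vbar N \<phi> n i) \<and>
      (\<forall>x\<in>{0..1}. v x = (\<Sum>i\<in>{1..N}. b i * hat N i x) + (\<Sum>i\<in>T2 N \<phi> n. hat N i x * \<xi> i x)))"

end

theory Submission
  imports Defs
begin

text \<open>On an element [x_{k-1}, x_k] only the hat functions N_{k-1} and N_k are active, and they
  sum to one there. Hence u - v = N_{k-1} e_{k-1} + N_k e_k with the patch errors
  e_i = u - I_{\<omega>_i} u - \<xi>^i (where \<xi>^i = 0 for x_i outside T_2), and the product rule together
  with |N_i'| = 1/h gives
  ||u - v||_E^2 \<le> 4 \<Sum>_i (\<beta> h^{-2} ||e_i||^2_{L^2(\<omega>_i)} + ||e_i||^2_{E(\<omega>_i)}).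
  For x_i in T_2 the assumed local L^2 estimate bounds h^{-1} ||e_i|| by 2 C_1 ||e_i||_E. Otherwise
  e_i vanishes at the left vertex of \<omega>_i, where interpolation is exact, and the Poincare
  inequality together with a \<ge> \<alpha> gives h^{-1} ||e_i|| \<le> 2 \<alpha>^{-1/2} ||e_i||_E.\<close>

section \<open>Weak derivatives on an interval\<close>

lemma emeasure_density_greaterThan:
  fixes F :: "real \<Rightarrow> real"
  assumes "F \<in> borel_measurable lborel" "integrable lborel (\<lambda>y. max 0 (F y) * indicator {x<..} y)"
  shows "emeasure (density lborel (\<lambda>y. ennreal (F y))) {x<..}
      = ennreal (\<integral>y. max 0 (F y) * indicator {x<..} y \<partial>lborel)"
proof -
  have "emeasure (density lborel (\<lambda>y. ennreal (F y))) {x<..}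
      = (\<integral>\<^sup>+ y. ennreal (max 0 (F y) * indicator {x<..} y) \<partial>lborel)"
    using assms(1) by (subst emeasure_density) (auto intro!: nn_integral_cong
        simp: indicator_def ennreal_max_0)
  then show ?thesis using assms(2) by (simp add: nn_integral_eq_integral)
qed

lemma AE_zero_if_integral_greaterThan_zero:
  fixes H :: "real \<Rightarrow> real"
  assumes H: "integrable lborel H" and zero: "\<And>x. (\<integral>y. H y * indicator {x<..} y \<partial>lborel) = 0"
  shows "AE y in lborel. H y = 0"
proof -
  have Hb: "H \<in> borel_measurable lborel" using H by auto
  define M1 where "M1 = density lborel (\<lambda>y. ennreal (H y))"
  define M2 where "M2 = density lborel (\<lambda>y. ennreal (- H y))"
  have pos: "integrable lborel (\<lambda>y. max 0 (H y) * indicator {x<..} y)"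
    and neg: "integrable lborel (\<lambda>y. max 0 (- H y) * indicator {x<..} y)" for x
    using H by (intro integrable_real_mult_indicator integrable_max; simp)+
  have M1_eq: "emeasure M1 {x<..} = ennreal (\<integral>y. max 0 (H y) * indicator {x<..} y \<partial>lborel)"
    and M2_eq: "emeasure M2 {x<..} = ennreal (\<integral>y. max 0 (- H y) * indicator {x<..} y \<partial>lborel)" for x
    unfolding M1_def M2_def using emeasure_density_greaterThan Hb pos neg by auto
  have parts_eq: "(\<integral>y. max 0 (H y) * indicator {x<..} y \<partial>lborel)
      = (\<integral>y. max 0 (- H y) * indicator {x<..} y \<partial>lborel)" for x
  proof -
    have "(\<integral>y. max 0 (H y) * indicator {x<..} y \<partial>lborel)
        - (\<integral>y. max 0 (- H y) * indicator {x<..} y \<partial>lborel)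
        = (\<integral>y. H y * indicator {x<..} y \<partial>lborel)"
      unfolding Bochner_Integration.integral_diff[OF pos neg, symmetric]
      by (intro Bochner_Integration.integral_cong) (auto simp: indicator_def)
    then show ?thesis using zero by simp
  qed
  have "M1 = M2"
  proof (rule measure_eqI_lessThan)
    show "sets M1 = sets borel" "sets M2 = sets borel" unfolding M1_def M2_def by auto
    show "emeasure M1 {x<..} < \<infinity>" for x using M1_eq by simp
    show "emeasure M1 {x<..} = emeasure M2 {x<..}" for x using M1_eq M2_eq parts_eq by simp
  qed
  then have "AE y in lborel. ennreal (H y) = ennreal (- H y)"
    unfolding M1_def M2_def using Hb
    by (subst (asm) sigma_finite_measure.density_unique_iff[OF sigma_finite_lborel]) auto
  then show ?thesis
  proof eventually_elim
    case (elim y)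
    then show ?case
      using ennreal_eq_0_iff[of "H y"] ennreal_eq_0_iff[of "- H y"] by (cases "H y \<ge> 0") auto
  qed
qed

lemma integral_greaterThan_zero_if_indefinite_integral_zero:
  fixes h :: "real \<Rightarrow> real"
  assumes h: "h integrable_on {c..d}" and zero: "\<And>x. x \<in> {c..d} \<Longrightarrow> integral {c..x} h = 0"
  shows "integral ({c..d} \<inter> {x<..}) h = 0"
proof (cases "x < c")
  case True
  then have "{c..d} \<inter> {x<..} = {c..d}" by auto
  then show ?thesis using zero by (cases "c \<le> d") auto
next
  case False
  show ?thesis
  proof (cases "x < d")
    case True
    with False have eq: "{c..d} \<inter> {x<..} = {x<..d}" by auto
    have "integral {x<..d} h = integral {x..d} h"
      by (rule integral_spike_set) (auto intro: negligible_subset[of "{x}"])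
    also have "\<dots> = integral {c..d} h - integral {c..x} h"
      using Henstock_Kurzweil_Integration.integral_combine[of c x d h] h False True by auto
    finally show ?thesis using eq zero False True by simp
  next
    case False
    then have "{c..d} \<inter> {x<..} = {}" by auto
    then show ?thesis by simp
  qed
qed

lemma negligible_nonzero_if_indefinite_integral_zero:
  fixes h :: "real \<Rightarrow> real"
  assumes h: "h absolutely_integrable_on {c..d}" and zero: "\<And>x. x \<in> {c..d} \<Longrightarrow> integral {c..x} h = 0"
  shows "negligible {x\<in>{c..d}. h x \<noteq> 0}"
proof -
  define H where "H = (\<lambda>x. indicator {c..d} x * h x)"
  have intH: "integrable lebesgue H" and HL: "H \<in> borel_measurable lebesgue"
    using h unfolding set_integrable_def H_def by auto
  obtain H' where H'b: "H' \<in> borel_measurable lborel" and ae: "AE x in lborel. H x = H' x"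
    using completion_ex_borel_measurable_real[OF HL] by blast
  have aeL: "AE x in lebesgue. H x = H' x"
    using ae by (simp add: AE_completion)
  have H'L: "H' \<in> borel_measurable lebesgue" using H'b by (rule measurable_completion)
  have "integrable lebesgue H'"
    using integrable_cong_AE[OF HL H'L aeL] intH by simp
  then have intH': "integrable lborel H'"
    using H'b by (simp add: integrable_completion)
  have "(\<integral>y. H' y * indicator {x<..} y \<partial>lborel) = 0" for x
  proof -
    have "(\<integral>y. H' y * indicator {x<..} y \<partial>lborel) = (\<integral>y. H y * indicator {x<..} y \<partial>lebesgue)"
      using aeL H'b by (subst integral_completion[symmetric])
        (auto intro!: integral_cong_AE borel_measurable_times H'L HL borel_measurable_indicator)
    also have "\<dots> = (LINT y:({c..d} \<inter> {x<..})|lebesgue. h y)"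
      unfolding set_lebesgue_integral_def H_def
      by (intro Bochner_Integration.integral_cong) (auto simp: indicator_def)
    also have "\<dots> = integral ({c..d} \<inter> {x<..}) h"
      using h by (intro set_lebesgue_integral_eq_integral set_integrable_subset[OF h]) auto
    also have "\<dots> = 0"
      using set_lebesgue_integral_eq_integral(1)[OF h] zero
      by (rule integral_greaterThan_zero_if_indefinite_integral_zero)
    finally show ?thesis .
  qed
  with intH' have "AE y in lborel. H' y = 0" by (rule AE_zero_if_integral_greaterThan_zero)
  with ae have "AE y in lborel. H y = 0" by eventually_elim simp
  then have "AE y in lebesgue. H y = 0" by (simp add: AE_completion)
  then obtain Z where Z: "Z \<in> null_sets lebesgue" "{y \<in> space lebesgue. H y \<noteq> 0} \<subseteq> Z"
    by (elim AE_E) blast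
  have "{x\<in>{c..d}. h x \<noteq> 0} \<subseteq> Z" using Z(2) by (auto simp: H_def)
  with Z(1) show ?thesis by (metis negligible_iff_null_sets negligible_subset)
qed

definition L2_on :: "real \<Rightarrow> real \<Rightarrow> (real \<Rightarrow> real) \<Rightarrow> bool" where
  "L2_on c d g \<longleftrightarrow> g \<in> borel_measurable (lebesgue_on {c..d}) \<and> (\<lambda>x. (g x)^2) integrable_on {c..d}"

lemma L2_on_absolutely_integrable:
  assumes "L2_on c d g" shows "g absolutely_integrable_on {c..d}"
proof (rule measurable_bounded_by_integrable_imp_absolutely_integrable)
  show "g \<in> borel_measurable (lebesgue_on {c..d})" using assms by (simp add: L2_on_def)
  show "(\<lambda>x. 1 + (g x)^2) integrable_on {c..d}"
    using assms by (intro integrable_add) (auto simp: L2_on_def)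
  show "norm (g x) \<le> 1 + (g x)^2" for x
  proof -
    have "0 \<le> (\<bar>g x\<bar> - 1)^2" by simp
    then show ?thesis by (simp add: power2_eq_square algebra_simps)
  qed
qed simp

lemma L2_on_integrable: "L2_on c d g \<Longrightarrow> g integrable_on {c..d}"
  using L2_on_absolutely_integrable absolutely_integrable_on_def by blast

lemma L2_on_add:
  assumes f: "L2_on c d f" and g: "L2_on c d g"
  shows "L2_on c d (\<lambda>x. f x + g x)"
  unfolding L2_on_def
proof
  have "f \<in> borel_measurable (lebesgue_on {c..d})" "g \<in> borel_measurable (lebesgue_on {c..d})"
    using f g by (auto simp: L2_on_def)
  then show m: "(\<lambda>x. f x + g x) \<in> borel_measurable (lebesgue_on {c..d})" by measurable
  have "(\<lambda>x. (f x + g x)^2) absolutely_integrable_on {c..d}"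
  proof (rule measurable_bounded_by_integrable_imp_absolutely_integrable)
    show "(\<lambda>x. (f x + g x)^2) \<in> borel_measurable (lebesgue_on {c..d})" using m by measurable
    show "(\<lambda>x. 2 * (f x)^2 + 2 * (g x)^2) integrable_on {c..d}"
      using f g by (intro integrable_add integrable_on_mult_right) (auto simp: L2_on_def)
    show "norm ((f x + g x)^2) \<le> 2 * (f x)^2 + 2 * (g x)^2" for x
    proof -
      have "(f x + g x)^2 = 2 * (f x)^2 + 2 * (g x)^2 - (f x - g x)^2"
        by (simp add: power2_eq_square algebra_simps)
      moreover have "0 \<le> (f x - g x)^2" "norm ((f x + g x)^2) = (f x + g x)^2" by simp_all
      ultimately show ?thesis by linarith
    qed
  qed simp
  then show "(\<lambda>x. (f x + g x)^2) integrable_on {c..d}"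
    by (simp add: absolutely_integrable_on_def)
qed

lemma L2_on_mult_bounded:
  assumes f: "f \<in> borel_measurable (lebesgue_on {c..d})" and B: "\<And>x. x \<in> {c..d} \<Longrightarrow> \<bar>f x\<bar> \<le> B"
    and g: "L2_on c d g"
  shows "L2_on c d (\<lambda>x. f x * g x)"
  unfolding L2_on_def
proof
  have "g \<in> borel_measurable (lebesgue_on {c..d})" using g by (simp add: L2_on_def)
  with f show m: "(\<lambda>x. f x * g x) \<in> borel_measurable (lebesgue_on {c..d})" by measurable
  have "(\<lambda>x. (f x * g x)^2) absolutely_integrable_on {c..d}"
  proof (rule measurable_bounded_by_integrable_imp_absolutely_integrable)
    show "(\<lambda>x. (f x * g x)^2) \<in> borel_measurable (lebesgue_on {c..d})" using m by measurable
    show "(\<lambda>x. B^2 * (g x)^2) integrable_on {c..d}"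
      using g by (intro integrable_on_mult_right) (auto simp: L2_on_def)
    show "norm ((f x * g x)^2) \<le> B^2 * (g x)^2" if "x \<in> {c..d}" for x
    proof -
      have "\<bar>f x\<bar>^2 \<le> B^2" by (rule power_mono) (use B[OF that] in auto)
      then show ?thesis by (simp add: power_mult_distrib mult_right_mono)
    qed
  qed simp
  then show "(\<lambda>x. (f x * g x)^2) integrable_on {c..d}"
    by (simp add: absolutely_integrable_on_def)
qed

lemma L2_on_continuous:
  assumes "continuous_on {c..d} f" shows "L2_on c d f"
  unfolding L2_on_def
proof
  show "f \<in> borel_measurable (lebesgue_on {c..d})"
    using assms by (rule continuous_imp_measurable_on_sets_lebesgue) simp
  show "(\<lambda>x. (f x)^2) integrable_on {c..d}"
    using assms by (intro integrable_continuous_interval continuous_intros)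
qed

lemma L2_on_cmult: "L2_on c d g \<Longrightarrow> L2_on c d (\<lambda>x. k * g x)"
  by (rule L2_on_mult_bounded[where B="\<bar>k\<bar>"]) auto

lemma L2_on_subinterval:
  assumes "L2_on c d g" "c \<le> c'" "d' \<le> d" shows "L2_on c' d' g"
proof -
  have "{c'..d'} \<subseteq> {c..d}" using assms(2,3) by auto
  then show ?thesis
    using assms(1) measurable_restrict_mono[of g lebesgue "{c..d}" borel "{c'..d'}"]
      integrable_subinterval_real[of "\<lambda>x. (g x)^2" c d c' d']
    unfolding L2_on_def by blast
qed

lemma L2_on_spike:
  assumes g: "L2_on c d g" and S: "negligible S" and eq: "\<And>x. x \<in> {c..d} - S \<Longrightarrow> g' x = g x"
  shows "L2_on c d g'"
proof -
  have "g' absolutely_integrable_on {c..d}"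
    by (rule absolutely_integrable_spike[OF L2_on_absolutely_integrable[OF g] S eq])
  then have "g' integrable_on {c..d}" using set_lebesgue_integral_eq_integral(1) by blast
  then have "g' \<in> borel_measurable (lebesgue_on {c..d})" by (rule integrable_imp_measurable)
  moreover have "(\<lambda>x. (g' x)\<^sup>2) integrable_on {c..d}"
  proof (rule integrable_spike[OF _ S])
    show "(\<lambda>x. (g x)\<^sup>2) integrable_on {c..d}" using g unfolding L2_on_def by blast
    show "(g' x)\<^sup>2 = (g x)\<^sup>2" if "x \<in> {c..d} - S" for x using eq[OF that] by simp
  qed
  ultimately show ?thesis unfolding L2_on_def by blast
qed

lemma H1_on_L2_on:
  assumes "H1_on c d w g" shows "L2_on c d g"
proof -
  have "g integrable_on {c..d}" "(\<lambda>x. (g x)^2) integrable_on {c..d}"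
    using assms by (auto simp: H1_on_def absolutely_integrable_on_def)
  then show ?thesis unfolding L2_on_def using integrable_imp_measurable by blast
qed

lemma H1_onI:
  assumes "c < d" "L2_on c d g" "\<And>x. x \<in> {c..d} \<Longrightarrow> w x = w c + integral {c..x} g"
  shows "H1_on c d w g"
  using assms L2_on_absolutely_integrable[OF assms(2)] unfolding H1_on_def L2_on_def by blast

lemma H1_on_less: "H1_on c d w g \<Longrightarrow> c < d"
  unfolding H1_on_def by blast

lemma H1_on_eq_integral: "H1_on c d w g \<Longrightarrow> x \<in> {c..d} \<Longrightarrow> w x = w c + integral {c..x} g"
  unfolding H1_on_def by blast

lemma H1_on_integrable: "H1_on c d w g \<Longrightarrow> g integrable_on {c..d}"
  using H1_on_L2_on L2_on_integrable by blast

lemma H1_on_continuous: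
  assumes "H1_on c d w g" shows "continuous_on {c..d} w"
proof -
  have "continuous_on {c..d} (\<lambda>x. w c + integral {c..x} g)"
    using indefinite_integral_continuous_1[OF H1_on_integrable[OF assms]] by (intro continuous_intros)
  then show ?thesis
    by (rule continuous_on_eq) (rule H1_on_eq_integral[OF assms, symmetric])
qed

lemma H1_on_subinterval:
  assumes H: "H1_on c d w g" and "c \<le> c'" "c' < d'" "d' \<le> d"
  shows "H1_on c' d' w g"
proof (rule H1_onI)
  show "L2_on c' d' g" using L2_on_subinterval[OF H1_on_L2_on[OF H]] assms by auto
  fix x assume x: "x \<in> {c'..d'}"
  have "integral {c..c'} g + integral {c'..x} g = integral {c..x} g"
    using x assms by (intro Henstock_Kurzweil_Integration.integral_combine
        integrable_subinterval_real[OF H1_on_integrable[OF H]]) auto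
  then show "w x = w c' + integral {c'..x} g"
    using H1_on_eq_integral[OF H, of x] H1_on_eq_integral[OF H, of c'] x assms by auto
qed fact

lemma H1_on_glue:
  assumes H1: "H1_on c m w g" and H2: "H1_on m d w g"
  shows "H1_on c d w g"
proof (rule H1_onI)
  have cm: "c < m" and md: "m < d" using H1_on_less H1 H2 by auto
  then show "c < d" by simp
  have L1: "L2_on c m g" and L2: "L2_on m d g" using H1_on_L2_on H1 H2 by auto
  show "L2_on c d g" unfolding L2_on_def
  proof
    have "g absolutely_integrable_on {c..d}"
      using absolutely_integrable_on_combine[OF L2_on_absolutely_integrable[OF L1]
          L2_on_absolutely_integrable[OF L2]] cm md by simp
    then show "g \<in> borel_measurable (lebesgue_on {c..d})"
      by (simp add: absolutely_integrable_measurable)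
    show "(\<lambda>x. (g x)^2) integrable_on {c..d}"
      using Henstock_Kurzweil_Integration.integrable_combine[of c m d "\<lambda>x. (g x)^2"] L1 L2 cm md
      by (auto simp: L2_on_def)
  qed
  fix x assume x: "x \<in> {c..d}"
  show "w x = w c + integral {c..x} g"
  proof (cases "x \<le> m")
    case True then show ?thesis by (intro H1_on_eq_integral[OF H1]) (use x in auto)
  next
    case False
    have "g integrable_on {c..x}"
      using Henstock_Kurzweil_Integration.integrable_combine[of c m x g] L2_on_integrable[OF L1]
        L2_on_integrable[OF L2_on_subinterval[OF L2, of m x]] False cm x by auto
    then have "integral {c..m} g + integral {m..x} g = integral {c..x} g"
      using False cm by (intro Henstock_Kurzweil_Integration.integral_combine) auto
    then show ?thesis
      using H1_on_eq_integral[OF H2, of x] H1_on_eq_integral[OF H1, of m] x False cm by auto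
  qed
qed

lemma H1_on_spike:
  assumes H: "H1_on c d w g" and S: "negligible S" and eq: "\<And>x. x \<in> {c..d} - S \<Longrightarrow> g' x = g x"
  shows "H1_on c d w g'"
proof (rule H1_onI)
  show "c < d" using H1_on_less[OF H] .
  show "L2_on c d g'" using L2_on_spike[OF H1_on_L2_on[OF H] S eq] .
  fix x assume x: "x \<in> {c..d}"
  have "integral {c..x} g' = integral {c..x} g"
    by (rule integral_spike[OF S]) (use eq x in auto)
  then show "w x = w c + integral {c..x} g'" using H1_on_eq_integral[OF H x] by simp
qed

lemma H1_on_glue_exists:
  assumes "H1_on c m w g1" and "H1_on m d w g2"
  shows "\<exists>g. H1_on c d w g"
proof -
  define g where "g x = (if x \<le> m then g1 x else g2 x)" for x
  have "H1_on c m w g"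
    by (rule H1_on_spike[OF assms(1), of "{}"]) (auto simp: g_def)
  moreover have "H1_on m d w g"
    by (rule H1_on_spike[OF assms(2), of "{m}"]) (auto simp: g_def)
  ultimately show ?thesis by (blast intro: H1_on_glue)
qed

lemma H1_on_cong:
  assumes H: "H1_on c d w g" and eq: "\<And>x. x \<in> {c..d} \<Longrightarrow> w' x = w x"
  shows "H1_on c d w' g"
proof (rule H1_onI)
  show "c < d" using H1_on_less[OF H] .
  then show "w' x = w' c + integral {c..x} g" if "x \<in> {c..d}" for x
    using H1_on_eq_integral[OF H that] eq[OF that] eq[of c] by simp
qed (use H1_on_L2_on[OF H] in simp)

lemma H1_on_add:
  assumes "H1_on c d w1 g1" "H1_on c d w2 g2"
  shows "H1_on c d (\<lambda>x. w1 x + w2 x) (\<lambda>x. g1 x + g2 x)"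
proof (rule H1_onI)
  show "c < d" using assms H1_on_less by blast
  show "L2_on c d (\<lambda>x. g1 x + g2 x)" using assms by (intro L2_on_add H1_on_L2_on)
  fix x assume x: "x \<in> {c..d}"
  have "g1 integrable_on {c..x}" "g2 integrable_on {c..x}"
    using x H1_on_integrable[OF assms(1)] H1_on_integrable[OF assms(2)]
    by (auto intro: integrable_subinterval_real)
  then show "w1 x + w2 x = w1 c + w2 c + integral {c..x} (\<lambda>x. g1 x + g2 x)"
    using H1_on_eq_integral[OF assms(1) x] H1_on_eq_integral[OF assms(2) x]
    by (simp add: integral_add)
qed

lemma H1_on_cmult:
  assumes "H1_on c d w g"
  shows "H1_on c d (\<lambda>x. k * w x) (\<lambda>x. k * g x)"
proof (rule H1_onI)
  show "c < d" using assms H1_on_less by blast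
  show "L2_on c d (\<lambda>x. k * g x)" using assms by (intro L2_on_cmult H1_on_L2_on)
  show "k * w x = k * w c + integral {c..x} (\<lambda>x. k * g x)" if "x \<in> {c..d}" for x
    using H1_on_eq_integral[OF assms that] by (simp add: algebra_simps)
qed

lemma H1_on_diff:
  assumes "H1_on c d w1 g1" "H1_on c d w2 g2"
  shows "H1_on c d (\<lambda>x. w1 x - w2 x) (\<lambda>x. g1 x - g2 x)"
  using H1_on_add[OF assms(1) H1_on_cmult[OF assms(2), of "-1"]] by simp

lemma H1_on_affine:
  assumes "c < d" shows "H1_on c d (\<lambda>x. p * x + q) (\<lambda>x. p)"
proof (rule H1_onI)
  show "L2_on c d (\<lambda>x. p)" by (rule L2_on_continuous) simp
  show "p * x + q = p * c + q + integral {c..x} (\<lambda>x. p)" if "x \<in> {c..d}" for x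
    using that by (simp add: algebra_simps)
qed fact

lemma H1_on_sum:
  assumes "finite J" "c < d" "\<And>j. j \<in> J \<Longrightarrow> H1_on c d (w j) (g j)"
  shows "H1_on c d (\<lambda>x. \<Sum>j\<in>J. w j x) (\<lambda>x. \<Sum>j\<in>J. g j x)"
  using assms
proof (induction J rule: finite_induct)
  case empty
  then show ?case using H1_on_affine[of c d 0 0] by simp
next
  case (insert j J)
  then show ?case by (simp add: H1_on_add)
qed

lemma absolutely_integrable_continuous_mult:
  fixes f g :: "real \<Rightarrow> real"
  assumes f: "continuous_on {c..d} f" and g: "g absolutely_integrable_on {c..d}"
  shows "(\<lambda>x. f x * g x) absolutely_integrable_on {c..d}"
proof (rule absolutely_integrable_bounded_measurable_product_real)
  show "f \<in> borel_measurable (lebesgue_on {c..d})"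
    using f by (rule continuous_imp_measurable_on_sets_lebesgue) simp
  show "bounded (f ` {c..d})"
    by (rule compact_imp_bounded[OF compact_continuous_image[OF f compact_Icc]])
qed (use g in simp_all)

lemma moment_increment_bound:
  fixes g :: "real \<Rightarrow> real"
  assumes g: "g absolutely_integrable_on {c..d}"
    and uv: "c \<le> u" "u \<le> v" "v \<le> d" and s: "u \<le> s" "s \<le> v"
  shows "\<bar>s * (integral {c..v} g - integral {c..u} g)
            - (integral {c..v} (\<lambda>t. t * g t) - integral {c..u} (\<lambda>t. t * g t))\<bar>
         \<le> (v - u) * (integral {c..v} (\<lambda>t. \<bar>g t\<bar>) - integral {c..u} (\<lambda>t. \<bar>g t\<bar>))"
proof -
  have ints: "f integrable_on {c..d} \<Longrightarrow> integral {c..v} f - integral {c..u} f = integral {u..v} f"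
    for f :: "real \<Rightarrow> real"
    using Henstock_Kurzweil_Integration.integral_combine[of c u v f]
      integrable_subinterval_real[of f c d c v] uv by auto
  have gi: "g integrable_on {c..d}" and agi: "(\<lambda>t. \<bar>g t\<bar>) integrable_on {c..d}"
    using g by (auto simp: absolutely_integrable_on_def)
  have tgi: "(\<lambda>t. t * g t) integrable_on {c..d}"
    using absolutely_integrable_continuous_mult[OF continuous_on_id g]
    by (simp add: absolutely_integrable_on_def)
  have sub: "f integrable_on {u..v}" if "f integrable_on {c..d}" for f :: "real \<Rightarrow> real"
    using that uv by (auto intro: integrable_subinterval_real)
  have "s * integral {u..v} g - integral {u..v} (\<lambda>t. t * g t) = integral {u..v} (\<lambda>t. (s - t) * g t)"
    using integral_diff[OF integrable_on_mult_right[OF sub[OF gi], of s] sub[OF tgi]]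
    by (simp add: algebra_simps)
  also have "\<bar>\<dots>\<bar> \<le> integral {u..v} (\<lambda>t. (v - u) * \<bar>g t\<bar>)"
  proof -
    have "norm (integral {u..v} (\<lambda>t. (s - t) * g t)) \<le> integral {u..v} (\<lambda>t. (v - u) * \<bar>g t\<bar>)"
    proof (rule integral_norm_bound_integral)
      show "(\<lambda>t. (s - t) * g t) integrable_on {u..v}"
        using integrable_diff[OF integrable_on_mult_right[OF sub[OF gi], of s] sub[OF tgi]]
        by (simp add: algebra_simps)
      show "(\<lambda>t. (v - u) * \<bar>g t\<bar>) integrable_on {u..v}"
        by (rule integrable_on_mult_right[OF sub[OF agi]])
      show "norm ((s - t) * g t) \<le> (v - u) * \<bar>g t\<bar>" if "t \<in> {u..v}" for t
        using that s by (auto simp: abs_mult intro!: mult_right_mono)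
    qed
    then show ?thesis by simp
  qed
  finally show ?thesis using ints[OF gi] ints[OF tgi] ints[OF agi] by simp
qed

lemma moment_increment_abs_le:
  fixes g :: "real \<Rightarrow> real"
  assumes g: "g absolutely_integrable_on {c..d}" and y: "y \<in> {c..d}" and z: "z \<in> {c..d}"
  defines "W \<equiv> \<lambda>x. integral {c..x} g" and "T \<equiv> \<lambda>x. integral {c..x} (\<lambda>t. t * g t)"
    and "A \<equiv> \<lambda>x. integral {c..x} (\<lambda>t. \<bar>g t\<bar>)"
  shows "\<bar>z * (W z - W y) - (T z - T y)\<bar> \<le> \<bar>z - y\<bar> * \<bar>A z - A y\<bar>"
proof (cases "y \<le> z")
  case True
  have "\<bar>z * (W z - W y) - (T z - T y)\<bar> \<le> (z - y) * (A z - A y)"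
    using moment_increment_bound[OF g, of y z z] y z True unfolding W_def T_def A_def by auto
  also have "\<dots> \<le> \<bar>z - y\<bar> * \<bar>A z - A y\<bar>"
    unfolding abs_mult[symmetric] by (rule abs_ge_self)
  finally show ?thesis using True by simp
next
  case False
  have "\<bar>z * (W y - W z) - (T y - T z)\<bar> \<le> (y - z) * (A y - A z)"
    using moment_increment_bound[OF g, of z y z] y z False unfolding W_def T_def A_def by auto
  also have "\<dots> \<le> \<bar>z - y\<bar> * \<bar>A z - A y\<bar>"
    unfolding abs_minus_commute[of z y] abs_minus_commute[of "A z" "A y"] abs_mult[symmetric]
    by (rule abs_ge_self)
  finally show ?thesis by (simp add: abs_minus_commute algebra_simps)
qed

lemma moment_has_vector_derivative:
  fixes g :: "real \<Rightarrow> real"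
  assumes g: "g absolutely_integrable_on {c..d}" and y: "y \<in> {c..d}"
  shows "((\<lambda>z. z * integral {c..z} g - integral {c..z} (\<lambda>t. t * g t))
           has_vector_derivative integral {c..y} g) (at y within {c..d})"
  unfolding has_vector_derivative_def has_derivative_within_alt
proof (intro conjI allI impI)
  define A where "A z = integral {c..z} (\<lambda>t. \<bar>g t\<bar>)" for z
  show "bounded_linear (\<lambda>h. h *\<^sub>R integral {c..y} g)" by (rule bounded_linear_scaleR_left)
  fix e :: real assume e: "0 < e"
  have "continuous_on {c..d} A"
    unfolding A_def using g
    by (intro indefinite_integral_continuous_1) (simp add: absolutely_integrable_on_def)
  then obtain \<delta> where \<delta>: "\<delta> > 0" "\<And>z. z \<in> {c..d} \<Longrightarrow> dist z y < \<delta> \<Longrightarrow> dist (A z) (A y) < e"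
    using y e unfolding continuous_on_iff by metis
  show "\<exists>\<delta>>0. \<forall>z\<in>{c..d}. norm (z - y) < \<delta> \<longrightarrow>
      norm (z * integral {c..z} g - integral {c..z} (\<lambda>t. t * g t)
        - (y * integral {c..y} g - integral {c..y} (\<lambda>t. t * g t))
        - (z - y) *\<^sub>R integral {c..y} g) \<le> e * norm (z - y)"
  proof (intro exI[of _ \<delta>] conjI ballI impI)
    fix z assume z: "z \<in> {c..d}" "norm (z - y) < \<delta>"
    have "\<bar>A z - A y\<bar> \<le> e" using \<delta>(2)[OF z(1)] z(2) by (simp add: dist_real_def)
    from mult_left_mono[OF this abs_ge_zero[of "z - y"]] moment_increment_abs_le[OF g y z(1)]
    show "norm (z * integral {c..z} g - integral {c..z} (\<lambda>t. t * g t)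
        - (y * integral {c..y} g - integral {c..y} (\<lambda>t. t * g t))
        - (z - y) *\<^sub>R integral {c..y} g) \<le> e * norm (z - y)"
      unfolding A_def by (simp add: algebra_simps)
  qed (rule \<delta>(1))
qed

text \<open>Here the indefinite integral of g is only absolutely continuous, so the library's integration
  by parts does not apply; the identity is read off from the derivative of the moment function.\<close>
lemma integral_affine_mult_by_parts:
  fixes g :: "real \<Rightarrow> real"
  assumes g: "g absolutely_integrable_on {c..d}" and x: "x \<in> {c..d}"
  shows "integral {c..x} (\<lambda>t. (p * t + q) * g t)
           = (p * x + q) * integral {c..x} g - p * integral {c..x} (\<lambda>t. integral {c..t} g)"
proof -
  have cx: "c \<le> x" "{c..x} \<subseteq> {c..d}" using x by auto
  have gi: "g integrable_on {c..x}" and tgi: "(\<lambda>t. t * g t) integrable_on {c..x}"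
    using g absolutely_integrable_continuous_mult[OF continuous_on_id g] cx
    by (auto simp: absolutely_integrable_on_def intro: integrable_subinterval_real)
  have "((\<lambda>t. integral {c..t} g) has_integral
          (x * integral {c..x} g - integral {c..x} (\<lambda>t. t * g t))) {c..x}"
  proof -
    have "((\<lambda>t. integral {c..t} g) has_integral
          (x * integral {c..x} g - integral {c..x} (\<lambda>t. t * g t))
          - (c * integral {c..c} g - integral {c..c} (\<lambda>t. t * g t))) {c..x}"
    proof (rule fundamental_theorem_of_calculus[OF cx(1)])
      fix y assume "y \<in> {c..x}"
      then show "((\<lambda>z. z * integral {c..z} g - integral {c..z} (\<lambda>t. t * g t))
          has_vector_derivative integral {c..y} g) (at y within {c..x})"
        using cx by (intro has_vector_derivative_within_subset[OF moment_has_vector_derivative[OF g]]) auto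
    qed
    then show ?thesis by simp
  qed
  then have by_moment: "integral {c..x} (\<lambda>t. integral {c..t} g)
      = x * integral {c..x} g - integral {c..x} (\<lambda>t. t * g t)"
    by (rule integral_unique)
  have "integral {c..x} (\<lambda>t. (p * t + q) * g t)
      = integral {c..x} (\<lambda>t. p * (t * g t) + q * g t)"
    by (rule integral_cong) (simp add: algebra_simps)
  also have "\<dots> = p * integral {c..x} (\<lambda>t. t * g t) + q * integral {c..x} g"
    unfolding integral_add[OF integrable_on_mult_right[OF tgi, of p] integrable_on_mult_right[OF gi, of q]]
    by simp
  finally show ?thesis unfolding by_moment by (simp add: algebra_simps)
qed

lemma H1_on_mult_affine:
  assumes H: "H1_on c d w g"
  shows "H1_on c d (\<lambda>x. (p * x + q) * w x) (\<lambda>x. p * w x + (p * x + q) * g x)"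
proof (rule H1_onI)
  show cd: "c < d" using H1_on_less[OF H] .
  have wc: "continuous_on {c..d} w" by (rule H1_on_continuous[OF H])
  have ga: "g absolutely_integrable_on {c..d}" using L2_on_absolutely_integrable[OF H1_on_L2_on[OF H]] .
  have bound: "\<bar>p * x + q\<bar> \<le> \<bar>p\<bar> * (\<bar>c\<bar> + \<bar>d\<bar>) + \<bar>q\<bar>" if "x \<in> {c..d}" for x
    using that by (auto simp: abs_mult intro!: order.trans[OF abs_triangle_ineq] mult_left_mono)
  have "(\<lambda>x. p * x + q) \<in> borel_measurable (lebesgue_on {c..d})"
    by (rule continuous_imp_measurable_on_sets_lebesgue) (auto intro!: continuous_intros)
  from L2_on_mult_bounded[OF this bound H1_on_L2_on[OF H]]
  show "L2_on c d (\<lambda>x. p * w x + (p * x + q) * g x)"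
    by (rule L2_on_add[OF L2_on_cmult[OF L2_on_continuous[OF wc]]])
  fix x assume x: "x \<in> {c..d}"
  define W where "W t = integral {c..t} g" for t
  have weq: "w t = w c + W t" if "t \<in> {c..x}" for t
    unfolding W_def by (rule H1_on_eq_integral[OF H]) (use that x in auto)
  have Wi: "W integrable_on {c..x}"
    unfolding W_def using x
    by (intro integrable_continuous_interval indefinite_integral_continuous_1
        integrable_subinterval_real[OF H1_on_integrable[OF H]]) auto
  have lgi: "(\<lambda>t. (p * t + q) * g t) integrable_on {c..x}"
  proof (rule integrable_subinterval_real)
    have "continuous_on {c..d} (\<lambda>t. p * t + q)" by (intro continuous_intros)
    from absolutely_integrable_continuous_mult[OF this ga]
    show "(\<lambda>t. (p * t + q) * g t) integrable_on {c..d}" by (simp add: absolutely_integrable_on_def)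
  qed (use x in auto)
  have wi: "w integrable_on {c..x}"
    using x by (intro integrable_continuous_interval continuous_on_subset[OF wc]) auto
  have "integral {c..x} (\<lambda>t. p * w t + (p * t + q) * g t)
      = p * integral {c..x} w + integral {c..x} (\<lambda>t. (p * t + q) * g t)"
    using integral_add[OF integrable_on_mult_right[OF wi] lgi] by simp
  also have "integral {c..x} w = integral {c..x} (\<lambda>t. w c + W t)"
    by (rule integral_cong) (rule weq)
  also have "\<dots> = w c * (x - c) + integral {c..x} W"
    using x integral_add[OF integrable_const_ivl Wi, of "w c"] by simp
  finally have "integral {c..x} (\<lambda>t. p * w t + (p * t + q) * g t)
      = p * (w c * (x - c) + integral {c..x} W) + integral {c..x} (\<lambda>t. (p * t + q) * g t)" .
  then show "(p * x + q) * w x = (p * c + q) * w c + integral {c..x} (\<lambda>x. p * w x + (p * x + q) * g x)"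
    using integral_affine_mult_by_parts[OF ga x, of p q] weq[of x] x
    unfolding W_def by (simp add: algebra_simps)
qed

lemma H1_on_derivative_unique:
  assumes H1: "H1_on c d w g1" and H2: "H1_on c d w g2"
  shows "negligible {x\<in>{c..d}. g1 x \<noteq> g2 x}"
proof -
  have "negligible {x \<in> {c..d}. g1 x - g2 x \<noteq> 0}"
  proof (rule negligible_nonzero_if_indefinite_integral_zero)
    show "(\<lambda>x. g1 x - g2 x) absolutely_integrable_on {c..d}"
      using H1 H2 by (intro set_integral_diff L2_on_absolutely_integrable H1_on_L2_on)
    fix x assume x: "x \<in> {c..d}"
    have "g1 integrable_on {c..x}" "g2 integrable_on {c..x}"
      using x H1_on_integrable[OF H1] H1_on_integrable[OF H2]
      by (auto intro: integrable_subinterval_real)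
    then show "integral {c..x} (\<lambda>x. g1 x - g2 x) = 0"
      using H1_on_eq_integral[OF H1 x] H1_on_eq_integral[OF H2 x] by (simp add: integral_diff)
  qed
  then show ?thesis by simp
qed

lemma H1_on_wderiv: "H1_on c d w g \<Longrightarrow> H1_on c d w (wderiv c d w)"
  unfolding wderiv_def by (rule someI[where P="\<lambda>g. H1_on c d w g"])

lemma integral_weighted_square_derivative_unique:
  assumes "H1_on c d w g1" "H1_on c d w g2"
  shows "integral {c..d} (\<lambda>x. a x * (g1 x)^2) = integral {c..d} (\<lambda>x. a x * (g2 x)^2)"
  using H1_on_derivative_unique[OF assms] by (intro integral_spike) auto

lemma energy_norm_eq:
  assumes "H1_on c d w g"
  shows "energy_norm a c d w = sqrt (integral {c..d} (\<lambda>x. a x * (g x)^2))"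
  unfolding energy_norm_def
  using integral_weighted_square_derivative_unique[OF H1_on_wderiv[OF assms] assms] by simp

lemma square_integral_le:
  fixes g :: "real \<Rightarrow> real"
  assumes cx: "c \<le> x" and gi: "g integrable_on {c..x}" and g2: "(\<lambda>t. (g t)^2) integrable_on {c..x}"
  shows "(integral {c..x} g)^2 \<le> (x - c) * integral {c..x} (\<lambda>t. (g t)^2)"
proof (cases "x = c")
  case False
  define L where "L = x - c"
  define I where "I = integral {c..x} g"
  define Q where "Q = integral {c..x} (\<lambda>t. (g t)^2)"
  define s where "s = I / L"
  have L: "L > 0" using cx False by (simp add: L_def)
  have int: "(\<lambda>t. ((g t)^2 - 2 * s * g t) + s^2) integrable_on {c..x}"
    by (intro integrable_add integrable_diff g2 integrable_on_mult_right gi integrable_const_ivl)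
  have "integral {c..x} (\<lambda>t. (g t - s)^2) = integral {c..x} (\<lambda>t. ((g t)^2 - 2 * s * g t) + s^2)"
    by (rule integral_cong) (simp add: power2_eq_square algebra_simps)
  also have "\<dots> = Q - 2 * s * I + s^2 * L"
    using integral_add[OF integrable_diff[OF g2 integrable_on_mult_right[OF gi]] integrable_const_ivl]
      integral_diff[OF g2 integrable_on_mult_right[OF gi], of "2 * s"] cx
    unfolding Q_def I_def L_def by simp
  finally have eq: "integral {c..x} (\<lambda>t. (g t - s)^2) = Q - 2 * s * I + s^2 * L" .
  have "(\<lambda>t. (g t - s)^2) integrable_on {c..x}"
    using int by (simp add: power2_eq_square algebra_simps)
  then have "0 \<le> Q - 2 * s * I + s^2 * L"
    unfolding eq[symmetric] by (rule integral_nonneg) simp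
  also have "Q - 2 * s * I + s^2 * L = Q - I^2 / L"
    unfolding s_def using L by (simp add: power2_eq_square field_simps)
  finally have "I^2 \<le> Q * L" using L by (simp add: field_simps)
  then show ?thesis unfolding I_def Q_def L_def by (simp add: mult.commute)
qed simp

lemma poincare_left_zero:
  assumes H: "H1_on c d e g" and e0: "e c = 0"
  shows "integral {c..d} (\<lambda>x. (e x)^2) \<le> (d - c)^2 * integral {c..d} (\<lambda>x. (g x)^2)"
proof -
  have cd: "c < d" using H1_on_less[OF H] .
  define K where "K = integral {c..d} (\<lambda>x. (g x)^2)"
  have g2: "(\<lambda>x. (g x)^2) integrable_on {c..d}" using H1_on_L2_on[OF H] unfolding L2_on_def by blast
  have pointwise: "(e x)^2 \<le> (d - c) * K" if x: "x \<in> {c..d}" for x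
  proof -
    have gi: "g integrable_on {c..x}" and g2x: "(\<lambda>t. (g t)^2) integrable_on {c..x}"
      using x H1_on_integrable[OF H] g2 by (auto intro: integrable_subinterval_real)
    have "(e x)^2 \<le> (x - c) * integral {c..x} (\<lambda>t. (g t)^2)"
      using square_integral_le[OF _ gi g2x] H1_on_eq_integral[OF H x] e0 x by simp
    also have "\<dots> \<le> (d - c) * K"
      unfolding K_def using x cd integral_nonneg[OF g2x]
      by (intro mult_mono integral_subset_le[OF _ g2x g2]) auto
    finally show ?thesis .
  qed
  have "integral {c..d} (\<lambda>x. (e x)^2) \<le> integral {c..d} (\<lambda>x. (d - c) * K)"
    using H1_on_continuous[OF H] pointwise
    by (intro integral_le integrable_continuous_interval continuous_intros) auto
  also have "\<dots> = (d - c)^2 * K" using cd by (simp add: power2_eq_square)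
  finally show ?thesis unfolding K_def .
qed

section \<open>The uniform mesh\<close>

lemma node_0 [simp]: "node N 0 = 0"
  by (simp add: node_def)

lemma node_N [simp]: "N \<ge> 1 \<Longrightarrow> node N N = 1"
  by (simp add: node_def)

lemma node_mono: "N \<ge> 1 \<Longrightarrow> k \<le> m \<Longrightarrow> node N k \<le> node N m"
  by (simp add: node_def divide_right_mono)

lemma node_strict_mono: "N \<ge> 1 \<Longrightarrow> k < m \<Longrightarrow> node N k < node N m"
  by (simp add: node_def divide_strict_right_mono)

lemma hat_nonneg: "0 \<le> hat N k x"
  by (simp add: hat_def)

lemma hat_le_one: "hat N k x \<le> 1"
  by (simp add: hat_def)

lemma hat_on_element:
  assumes N: "N \<ge> 1" and k: "k \<ge> 1" and x: "x \<in> {node N (k - 1)..node N k}"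
  shows "hat N k x = real N * x - (real k - 1)"
    and "hat N (k - 1) x = real k - real N * x"
    and "i \<noteq> k \<Longrightarrow> i \<noteq> k - 1 \<Longrightarrow> hat N i x = 0"
proof -
  have "real (k - 1) / real N \<le> x" "x \<le> real k / real N" using x by (auto simp: node_def)
  then have b: "real k - 1 \<le> real N * x" "real N * x \<le> real k"
    using N k by (auto simp: field_simps of_nat_diff)
  show "hat N k x = real N * x - (real k - 1)" using b by (simp add: hat_def abs_if)
  show "hat N (k - 1) x = real k - real N * x" using b k by (simp add: hat_def abs_if of_nat_diff)
  assume "i \<noteq> k" "i \<noteq> k - 1"
  then have "real i + 2 \<le> real k \<or> real k + 1 \<le> real i" by linarith
  then show "hat N i x = 0" using b by (auto simp: hat_def abs_if)
qed

lemma hat_affine_on_element: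
  assumes N: "N \<ge> 1" and k: "k \<ge> 1"
  obtains p q where "\<And>x. x \<in> {node N (k - 1)..node N k} \<Longrightarrow> hat N m x = p * x + q"
proof -
  consider "m = k" | "m = k - 1" | "m \<noteq> k" "m \<noteq> k - 1" by blast
  then show ?thesis
  proof cases
    case 1 then show ?thesis using that[of "real N" "1 - real k"] hat_on_element(1)[OF N k] by auto
  next
    case 2 then show ?thesis using that[of "- real N" "real k"] hat_on_element(2)[OF N k] by auto
  next
    case 3 then show ?thesis using that[of 0 0] hat_on_element(3)[OF N k] by auto
  qed
qed

lemma sum_hat_on_element:
  assumes N: "N \<ge> 1" and k: "k \<ge> 1" and x: "x \<in> {node N (k - 1)..node N k}"
    and S: "finite S" "k - 1 \<in> S" "k \<in> S"
  shows "(\<Sum>m\<in>S. hat N m x * F m) = hat N (k - 1) x * F (k - 1) + hat N k x * F k"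
proof -
  have "(\<Sum>m\<in>S. hat N m x * F m) = (\<Sum>m\<in>{k - 1, k}. hat N m x * F m)"
    by (rule sum.mono_neutral_right[OF S(1)]) (use S hat_on_element(3)[OF N k x] in auto)
  then show ?thesis using k by simp
qed

lemma finite_patch_vertices: "finite (patch_vertices N i)"
  by (rule finite_subset[of _ "{..N}"]) (auto simp: patch_vertices_def)

lemma patch_interp_on_element:
  assumes N: "N \<ge> 1" and k: "k \<ge> 1" "k \<le> N" and x: "x \<in> {node N (k - 1)..node N k}"
    and i: "i = k - 1 \<or> i = k"
  shows "patch_interp N i w x = w (node N (k - 1)) * hat N (k - 1) x + w (node N k) * hat N k x"
proof -
  have "patch_interp N i w x = (\<Sum>m\<in>patch_vertices N i. hat N m x * w (node N m))"
    unfolding patch_interp_def by (simp add: mult.commute)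
  also have "\<dots> = hat N (k - 1) x * w (node N (k - 1)) + hat N k x * w (node N k)"
    by (rule sum_hat_on_element[OF N k(1) x finite_patch_vertices])
      (use i k in \<open>auto simp: patch_vertices_def\<close>)
  finally show ?thesis by (simp add: mult.commute)
qed

lemma patch_l_eq: "patch_l N i = node N (i - 1)"
  by (simp add: patch_l_def)

lemma patch_r_eq: "N \<ge> 1 \<Longrightarrow> i \<le> N \<Longrightarrow> patch_r N i = node N (min (i + 1) N)"
  by (auto simp: patch_r_def min_def)

lemma patch_less: "N \<ge> 1 \<Longrightarrow> i \<le> N \<Longrightarrow> patch_l N i < patch_r N i"
  unfolding patch_l_eq patch_r_eq by (rule node_strict_mono) auto

lemma patch_subset_unit: "N \<ge> 1 \<Longrightarrow> i \<le> N \<Longrightarrow> 0 \<le> patch_l N i \<and> patch_r N i \<le> 1"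
  unfolding patch_l_eq patch_r_eq
  using node_mono[of N 0 "i - 1"] node_mono[of N "min (i + 1) N" N] by auto

lemma patch_diameter_le: "N \<ge> 1 \<Longrightarrow> i \<le> N \<Longrightarrow> patch_r N i - patch_l N i \<le> 2 / real N"
  unfolding patch_l_eq patch_r_eq
  by (auto simp: node_def min_def diff_divide_distrib[symmetric] of_nat_diff divide_right_mono)

lemma element_subset_patch:
  assumes N: "N \<ge> 1" and k: "k \<ge> 1" "k \<le> N" and i: "i = k - 1 \<or> i = k"
  shows "patch_l N i \<le> node N (k - 1)" "node N k \<le> patch_r N i"
proof -
  show "patch_l N i \<le> node N (k - 1)" unfolding patch_l_eq by (rule node_mono) (use N i in auto)
  show "node N k \<le> patch_r N i" using i k by (subst patch_r_eq[OF N]) (auto intro: node_mono[OF N])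
qed

lemma integral_patch_split:
  fixes f :: "real \<Rightarrow> real"
  assumes N: "N \<ge> 1" and i: "i \<le> N" and f: "f integrable_on {patch_l N i..patch_r N i}"
  shows "integral {patch_l N i..patch_r N i} f =
           (if 1 \<le> i then integral {node N (i - 1)..node N i} f else 0)
         + (if i + 1 \<le> N then integral {node N i..node N (i + 1)} f else 0)"
proof -
  consider "i = 0" | "i = N" "i \<ge> 1" | "1 \<le> i" "i < N" using N i by linarith
  then show ?thesis
  proof cases
    case 1 then show ?thesis using N by (simp add: patch_l_def patch_r_def)
  next
    case 2 then show ?thesis by (simp add: patch_l_def patch_r_def)
  next
    case 3
    then have "patch_l N i = node N (i - 1)" "patch_r N i = node N (i + 1)"
      by (auto simp: patch_l_def patch_r_def)
    with 3 show ?thesis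
      using Henstock_Kurzweil_Integration.integral_combine[of "node N (i - 1)" "node N i" "node N (i + 1)" f] f N
      by (simp add: node_mono)
  qed
qed

lemma H1_on_patch_from_elements:
  assumes N: "N \<ge> 1" and i: "i \<le> N"
    and elements: "\<And>k. 1 \<le> k \<Longrightarrow> k \<le> N \<Longrightarrow> \<exists>g. H1_on (node N (k - 1)) (node N k) w g"
  shows "\<exists>g. H1_on (patch_l N i) (patch_r N i) w g"
proof -
  consider "i = 0" | "i = N" "i \<ge> 1" | "1 \<le> i" "i < N" using N i by linarith
  then show ?thesis
  proof cases
    case 1 then show ?thesis using elements[of 1] N by (simp add: patch_l_def patch_r_def)
  next
    case 2 then show ?thesis using elements[of i] by (simp add: patch_l_def patch_r_def)
  next
    case 3
    then show ?thesis
      using H1_on_glue_exists elements[of i] elements[of "i + 1"] by (auto simp: patch_l_def patch_r_def)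
  qed
qed

lemma H1_on_upto_node:
  assumes "1 \<le> m" and elements: "\<And>k. 1 \<le> k \<Longrightarrow> k \<le> m \<Longrightarrow> \<exists>g. H1_on (node N (k - 1)) (node N k) w g"
  shows "\<exists>g. H1_on 0 (node N m) w g"
  using assms
proof (induction m rule: nat_induct_at_least)
  case base
  then show ?case by simp
next
  case (Suc m)
  then obtain g1 g2 where "H1_on 0 (node N m) w g1" "H1_on (node N m) (node N (Suc m)) w g2"
    by (metis Suc_diff_1 diff_Suc_1 le_SucI le_refl not_one_le_zero Suc_le_mono order_trans)
  then show ?case by (rule H1_on_glue_exists)
qed

lemma integral_upto_node:
  fixes f :: "real \<Rightarrow> real"
  assumes N: "N \<ge> 1" and f: "f integrable_on {0..1}" and m: "m \<le> N"
  shows "integral {0..node N m} f = (\<Sum>k\<in>{1..m}. integral {node N (k - 1)..node N k} f)"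
  using m
proof (induction m)
  case (Suc m)
  have "f integrable_on {0..node N (Suc m)}"
    using node_mono[OF N Suc.prems] N by (intro integrable_subinterval_real[OF f]) auto
  then have "integral {0..node N m} f + integral {node N m..node N (Suc m)} f = integral {0..node N (Suc m)} f"
    using node_mono[OF N, of 0 m] node_mono[OF N, of m "Suc m"]
    by (intro Henstock_Kurzweil_Integration.integral_combine) auto
  then show ?case using Suc by simp
qed simp

lemma hat_H1_on_patch:
  assumes N: "N \<ge> 1" and i: "i \<le> N"
  shows "\<exists>g. H1_on (patch_l N i) (patch_r N i) (hat N m) g"
proof (rule H1_on_patch_from_elements[OF N i])
  fix k assume k: "1 \<le> k" "k \<le> N"
  obtain p q where pq: "\<And>x. x \<in> {node N (k - 1)..node N k} \<Longrightarrow> hat N m x = p * x + q"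
    using hat_affine_on_element[OF N k(1)] by blast
  have "H1_on (node N (k - 1)) (node N k) (\<lambda>x. p * x + q) (\<lambda>x. p)"
    using k by (intro H1_on_affine node_strict_mono[OF N]) auto
  then show "\<exists>g. H1_on (node N (k - 1)) (node N k) (hat N m) g"
    using H1_on_cong pq by blast
qed

lemma patch_interp_H1_on_patch:
  assumes N: "N \<ge> 1" and i: "i \<le> N"
  shows "\<exists>g. H1_on (patch_l N i) (patch_r N i) (patch_interp N i w) g"
proof -
  have "\<exists>g. H1_on (patch_l N i) (patch_r N i) (\<lambda>x. w (node N m) * hat N m x) g" for m
    using hat_H1_on_patch[OF N i] H1_on_cmult by blast
  then obtain G where "\<And>m. H1_on (patch_l N i) (patch_r N i) (\<lambda>x. w (node N m) * hat N m x) (G m)"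
    by metis
  then have "H1_on (patch_l N i) (patch_r N i) (patch_interp N i w) (\<lambda>x. \<Sum>m\<in>patch_vertices N i. G m x)"
    unfolding patch_interp_def by (intro H1_on_sum[OF finite_patch_vertices patch_less[OF N i]])
  then show ?thesis by blast
qed

section \<open>Energy norms for a bounded elliptic coefficient\<close>

lemma integral_le_open_interval:
  fixes f h :: "real \<Rightarrow> real"
  assumes "f integrable_on {c..d}" "h integrable_on {c..d}" "\<And>x. x \<in> {c<..<d} \<Longrightarrow> f x \<le> h x"
  shows "integral {c..d} f \<le> integral {c..d} h"
proof -
  have "integral {c<..<d} f \<le> integral {c<..<d} h"
    by (rule integral_le) (use assms integrable_on_open_interval_real in auto)
  then show ?thesis by (simp add: integral_open_interval_real)
qed

lemma square_sum4_le: "((t1::real) + t2 + t3 + t4)^2 \<le> 4 * (t1^2 + t2^2 + t3^2 + t4^2)"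
proof -
  have "4 * (t1^2 + t2^2 + t3^2 + t4^2) - (t1 + t2 + t3 + t4)^2
     = (t1-t2)^2 + (t1-t3)^2 + (t1-t4)^2 + (t2-t3)^2 + (t2-t4)^2 + (t3-t4)^2"
    by (simp add: power2_eq_square algebra_simps)
  moreover have "0 \<le> (t1-t2)^2 + (t1-t3)^2 + (t1-t4)^2 + (t2-t3)^2 + (t2-t4)^2 + (t3-t4)^2"
    by simp
  ultimately show ?thesis by linarith
qed

text \<open>The slopes of the two active hat functions are \<open>\<mp>t\<close> and their values lie in [0,1].\<close>
lemma weighted_square_hat_combination_le:
  fixes A B t h1 h2 e1 e2 g1 g2 :: real
  assumes A: "0 \<le> A" "A \<le> B" and h: "0 \<le> h1" "h1 \<le> 1" "0 \<le> h2" "h2 \<le> 1"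
  shows "A * ((- t * e1 + h1 * g1) + (t * e2 + h2 * g2))^2
           \<le> 4 * ((B * t^2 * e1^2 + A * g1^2) + (B * t^2 * e2^2 + A * g2^2))"
proof -
  have "A * ((- t * e1 + h1 * g1) + (t * e2 + h2 * g2))^2
      \<le> A * (4 * ((- t * e1)^2 + (h1 * g1)^2 + (t * e2)^2 + (h2 * g2)^2))"
    using square_sum4_le[of "- t * e1" "h1 * g1" "t * e2" "h2 * g2"] A
    by (intro mult_left_mono) (simp_all add: add.assoc)
  also have "\<dots> \<le> 4 * ((B * t^2 * e1^2 + A * g1^2) + (B * t^2 * e2^2 + A * g2^2))"
  proof -
    have "h1^2 \<le> 1" "h2^2 \<le> 1" using h by (simp_all add: power_le_one)
    then have "A * (h1 * g1)^2 \<le> A * g1^2" "A * (h2 * g2)^2 \<le> A * g2^2"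
      using A by (auto simp: power_mult_distrib intro!: mult_left_mono mult_left_le_one_le)
    moreover have "A * (- t * e1)^2 \<le> B * t^2 * e1^2" "A * (t * e2)^2 \<le> B * t^2 * e2^2"
      using A by (auto simp: power_mult_distrib mult.assoc intro!: mult_right_mono)
    ultimately show ?thesis by (simp add: algebra_simps)
  qed
  finally show ?thesis .
qed

locale elliptic_coefficient =
  fixes a :: "real \<Rightarrow> real" and \<alpha> \<beta> :: real
  assumes a_measurable: "a \<in> borel_measurable (lebesgue_on {0..1})"
    and a_bounds: "\<And>x. x \<in> {0<..<1} \<Longrightarrow> \<alpha> \<le> a x \<and> a x \<le> \<beta>"
    and \<alpha>_pos: "0 < \<alpha>"
begin

lemma \<alpha>_le_\<beta>: "\<alpha> \<le> \<beta>"
  using a_bounds[of "1/2"] by auto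

lemma weighted_square_integrable:
  assumes cd: "0 \<le> c" "d \<le> 1" and g: "L2_on c d g"
  shows "(\<lambda>x. a x * (g x)^2) integrable_on {c..d}"
proof -
  have "(\<lambda>x. a x * (g x)^2) absolutely_integrable_on {c..d}"
  proof (rule absolutely_integrable_bounded_measurable_product_real)
    show "a \<in> borel_measurable (lebesgue_on {c..d})"
      using measurable_restrict_mono[OF a_measurable, of "{c..d}"] cd by auto
    have "\<bar>a x\<bar> \<le> max \<beta> (max \<bar>a 0\<bar> \<bar>a 1\<bar>)" if "x \<in> {0..1}" for x
      using that a_bounds[of x] \<alpha>_pos by (cases "x \<in> {0<..<1}") auto
    then show "bounded (a ` {c..d})"
      unfolding bounded_iff using cd by (intro exI[of _ "max \<beta> (max \<bar>a 0\<bar> \<bar>a 1\<bar>)"]) auto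
    show "(\<lambda>x. (g x)^2) absolutely_integrable_on {c..d}"
      by (rule nonnegative_absolutely_integrable_1) (use g in \<open>auto simp: L2_on_def\<close>)
  qed simp
  then show ?thesis by (simp add: absolutely_integrable_on_def)
qed

lemma energy_norm_sq:
  assumes cd: "0 \<le> c" "d \<le> 1" and H: "H1_on c d w g"
  shows "(energy_norm a c d w)^2 = integral {c..d} (\<lambda>x. a x * (g x)^2)"
    and "0 \<le> energy_norm a c d w"
proof -
  have "integral {c..d} (\<lambda>x. 0) \<le> integral {c..d} (\<lambda>x. a x * (g x)^2)"
  proof (rule integral_le_open_interval)
    show "0 \<le> a x * (g x)^2" if "x \<in> {c<..<d}" for x
      using a_bounds[of x] that cd \<alpha>_pos by (fastforce intro: mult_nonneg_nonneg)
  qed (use weighted_square_integrable[OF cd H1_on_L2_on[OF H]] integrable_0 in simp_all)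
  then have "0 \<le> integral {c..d} (\<lambda>x. a x * (g x)^2)" by simp
  then show "(energy_norm a c d w)^2 = integral {c..d} (\<lambda>x. a x * (g x)^2)"
    and "0 \<le> energy_norm a c d w"
    unfolding energy_norm_eq[OF H] by simp_all
qed

lemma integral_square_le_energy:
  assumes cd: "0 \<le> c" "d \<le> 1" and g: "L2_on c d g"
  shows "integral {c..d} (\<lambda>x. (g x)^2) \<le> integral {c..d} (\<lambda>x. a x * (g x)^2) / \<alpha>"
proof -
  have "integral {c..d} (\<lambda>x. \<alpha> * (g x)^2) \<le> integral {c..d} (\<lambda>x. a x * (g x)^2)"
  proof (rule integral_le_open_interval)
    show "(\<lambda>x. \<alpha> * (g x)^2) integrable_on {c..d}"
      using g by (intro integrable_on_mult_right) (simp add: L2_on_def)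
    show "(\<lambda>x. a x * (g x)^2) integrable_on {c..d}" by (rule weighted_square_integrable[OF cd g])
    show "\<alpha> * (g x)^2 \<le> a x * (g x)^2" if "x \<in> {c<..<d}" for x
      using a_bounds[of x] that cd by (auto intro: mult_right_mono)
  qed
  then show ?thesis using \<alpha>_pos by (simp add: field_simps)
qed

end

section \<open>The enriched approximation and its error\<close>

locale enriched_patch_approximation = elliptic_coefficient a \<alpha> \<beta> for a \<alpha> \<beta> +
  fixes N :: nat and u :: "real \<Rightarrow> real" and n :: "nat \<Rightarrow> nat"
    and \<phi> :: "nat \<Rightarrow> nat \<Rightarrow> real \<Rightarrow> real" and \<xi> :: "nat \<Rightarrow> real \<Rightarrow> real" and \<epsilon> :: "nat \<Rightarrow> real"
    and C\<^sub>1 :: real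
  assumes N_pos: "1 \<le> N" and u_H1: "\<exists>g. H1_on 0 1 u g" and u_0: "u 0 = 0"
    and \<phi>_H1: "\<And>i j. i \<le> N \<Longrightarrow> j \<le> n i \<Longrightarrow> \<exists>g. H1_on (patch_l N i) (patch_r N i) (\<phi> i j) g"
    and \<xi>_in_Vbar: "\<And>i. i \<in> T2 N \<phi> n \<Longrightarrow> \<xi> i \<in> Vbar N \<phi> n i"
    and \<xi>_L2_bound: "\<And>i. i \<in> T2 N \<phi> n \<Longrightarrow>
       L2_norm (patch_l N i) (patch_r N i) (\<lambda>x. u x - patch_interp N i u x - \<xi> i x)
         \<le> C\<^sub>1 * (patch_r N i - patch_l N i) *
           energy_norm a (patch_l N i) (patch_r N i) (\<lambda>x. u x - patch_interp N i u x - \<xi> i x)"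
    and \<xi>_energy_bound: "\<And>i. i \<in> T2 N \<phi> n \<Longrightarrow>
       energy_norm a (patch_l N i) (patch_r N i) (\<lambda>x. u x - patch_interp N i u x - \<xi> i x) \<le> \<epsilon> i"
begin

abbreviation "pl i \<equiv> patch_l N i"
abbreviation "pr i \<equiv> patch_r N i"
abbreviation "enriched \<equiv> T2 N \<phi> n"

definition enrichment :: "nat \<Rightarrow> real \<Rightarrow> real" where
  "enrichment i = (if i \<in> enriched then \<xi> i else (\<lambda>x. 0))"

definition local_error :: "nat \<Rightarrow> real \<Rightarrow> real" where
  "local_error i x = u x - patch_interp N i u x - enrichment i x"

definition local_error_deriv :: "nat \<Rightarrow> real \<Rightarrow> real" where
  "local_error_deriv i = wderiv (pl i) (pr i) (local_error i)"

definition local_energy :: "nat \<Rightarrow> real" where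
  "local_energy i = energy_norm a (pl i) (pr i) (local_error i)"

text \<open>The hat function at the node 0 is not in \<open>S\<^sub>1\<close>; as \<open>u 0 = 0\<close>, the \<open>S\<^sub>1\<close>-part is nevertheless
  the piecewise linear interpolant of u.\<close>
definition approximant :: "real \<Rightarrow> real" where
  "approximant x = (\<Sum>i\<in>{1..N}. u (node N i) * hat N i x) + (\<Sum>i\<in>enriched. hat N i x * \<xi> i x)"

lemma enriched_subset: "enriched \<subseteq> {0..N}"
  by (auto simp: T2_def)

lemma patch_bounds: "i \<le> N \<Longrightarrow> 0 \<le> pl i" "i \<le> N \<Longrightarrow> pr i \<le> 1" "i \<le> N \<Longrightarrow> pl i < pr i"
  using patch_subset_unit[OF N_pos] patch_less[OF N_pos] by auto

lemma approximant_in_S: "in_S N \<phi> n approximant"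
  unfolding in_S_def
  by (rule exI[of _ "\<lambda>i. u (node N i)"], rule exI[of _ \<xi>]) (simp add: \<xi>_in_Vbar approximant_def)

lemma enrichment_H1:
  assumes i: "i \<le> N" shows "\<exists>g. H1_on (pl i) (pr i) (enrichment i) g"
proof (cases "i \<in> enriched")
  case False
  then show ?thesis
    using H1_on_affine[OF patch_bounds(3)[OF i], of 0 0] by (auto simp: enrichment_def)
next
  case True
  then obtain b where b: "\<And>x. x \<in> {pl i..pr i} \<Longrightarrow>
      \<xi> i x = (\<Sum>j\<in>{1..n i}. b j * (\<phi> i j x - patch_interp N i (\<phi> i j) x))"
    using \<xi>_in_Vbar unfolding Vbar_def by blast
  have "\<exists>g. H1_on (pl i) (pr i) (\<lambda>x. b j * (\<phi> i j x - patch_interp N i (\<phi> i j) x)) g"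
    if j: "j \<in> {1..n i}" for j
  proof -
    obtain g1 g2 where "H1_on (pl i) (pr i) (\<phi> i j) g1" "H1_on (pl i) (pr i) (patch_interp N i (\<phi> i j)) g2"
      using \<phi>_H1[OF i, of j] patch_interp_H1_on_patch[OF N_pos i, of "\<phi> i j"] j by auto
    from H1_on_cmult[OF H1_on_diff[OF this], of "b j"] show ?thesis by blast
  qed
  then obtain G where "\<And>j. j \<in> {1..n i} \<Longrightarrow>
      H1_on (pl i) (pr i) (\<lambda>x. b j * (\<phi> i j x - patch_interp N i (\<phi> i j) x)) (G j)"
    by metis
  then have "H1_on (pl i) (pr i) (\<lambda>x. \<Sum>j\<in>{1..n i}. b j * (\<phi> i j x - patch_interp N i (\<phi> i j) x))
      (\<lambda>x. \<Sum>j\<in>{1..n i}. G j x)"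
    by (intro H1_on_sum patch_bounds(3)[OF i]) auto
  then have "H1_on (pl i) (pr i) (\<xi> i) (\<lambda>x. \<Sum>j\<in>{1..n i}. G j x)"
    by (rule H1_on_cong) (use b in auto)
  with True show ?thesis by (auto simp: enrichment_def)
qed

lemma local_error_H1:
  assumes i: "i \<le> N" shows "H1_on (pl i) (pr i) (local_error i) (local_error_deriv i)"
proof -
  obtain g\<^sub>u where "H1_on 0 1 u g\<^sub>u" using u_H1 by blast
  then have "H1_on (pl i) (pr i) u g\<^sub>u" by (rule H1_on_subinterval) (use patch_bounds[OF i] in auto)
  moreover obtain g\<^sub>I g\<^sub>\<xi> where "H1_on (pl i) (pr i) (patch_interp N i u) g\<^sub>I"
    and "H1_on (pl i) (pr i) (enrichment i) g\<^sub>\<xi>"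
    using patch_interp_H1_on_patch[OF N_pos i, of u] enrichment_H1[OF i] by blast
  ultimately have "H1_on (pl i) (pr i) (\<lambda>x. u x - patch_interp N i u x - enrichment i x)
      (\<lambda>x. g\<^sub>u x - g\<^sub>I x - g\<^sub>\<xi> x)"
    by (intro H1_on_diff)
  then have "\<exists>g. H1_on (pl i) (pr i) (local_error i) g"
    unfolding local_error_def[abs_def] by blast
  then show ?thesis unfolding local_error_deriv_def by (blast intro: H1_on_wderiv)
qed

lemma local_energy_sq: "i \<le> N \<Longrightarrow> (local_energy i)^2 = integral {pl i..pr i} (\<lambda>x. a x * (local_error_deriv i x)^2)"
  and local_energy_nonneg: "i \<le> N \<Longrightarrow> 0 \<le> local_energy i"
  unfolding local_energy_def using energy_norm_sq[OF _ _ local_error_H1] patch_bounds by blast+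

lemma approximation_error_on_element:
  assumes k: "1 \<le> k" "k \<le> N" and x: "x \<in> {node N (k - 1)..node N k}"
  shows "u x - approximant x
    = (- real N * x + real k) * local_error (k - 1) x + (real N * x + (1 - real k)) * local_error k x"
proof -
  define L where "L = u (node N (k - 1)) * hat N (k - 1) x + u (node N k) * hat N k x"
  have interp: "patch_interp N (k - 1) u x = L" "patch_interp N k u x = L"
    unfolding L_def using patch_interp_on_element[OF N_pos k x] by auto
  have "(\<Sum>i\<in>{1..N}. u (node N i) * hat N i x) = (\<Sum>i\<in>{0..N}. hat N i x * u (node N i))"
    using u_0 by (simp add: sum.atLeast_Suc_atMost[of 0 N] mult.commute)
  also have "\<dots> = L"
    unfolding L_def using k by (subst sum_hat_on_element[OF N_pos k(1) x]) (auto simp: mult.commute)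
  finally have nodal: "(\<Sum>i\<in>{1..N}. u (node N i) * hat N i x) = L" .
  have "(\<Sum>i\<in>enriched. hat N i x * \<xi> i x) = (\<Sum>i\<in>{0..N}. hat N i x * enrichment i x)"
    by (rule sum.mono_neutral_cong_left) (use enriched_subset in \<open>auto simp: enrichment_def\<close>)
  also have "\<dots> = hat N (k - 1) x * enrichment (k - 1) x + hat N k x * enrichment k x"
    using k by (intro sum_hat_on_element[OF N_pos k(1) x]) auto
  finally have enriched_part: "(\<Sum>i\<in>enriched. hat N i x * \<xi> i x)
      = hat N (k - 1) x * enrichment (k - 1) x + hat N k x * enrichment k x" .
  have h: "hat N (k - 1) x = - real N * x + real k" "hat N k x = real N * x + (1 - real k)"
    using hat_on_element(1,2)[OF N_pos k(1) x] by auto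
  then have unity: "hat N (k - 1) x = 1 - hat N k x" by simp
  show ?thesis
    unfolding approximant_def local_error_def nodal enriched_part interp h[symmetric] unity
    by (simp add: algebra_simps)
qed

definition error_deriv :: "nat \<Rightarrow> real \<Rightarrow> real" where
  "error_deriv k x = (- real N * local_error (k - 1) x + (- real N * x + real k) * local_error_deriv (k - 1) x)
         + (real N * local_error k x + (real N * x + (1 - real k)) * local_error_deriv k x)"

lemma local_error_H1_on_element:
  assumes k: "1 \<le> k" "k \<le> N" and j: "j = k - 1 \<or> j = k"
  shows "H1_on (node N (k - 1)) (node N k) (local_error j) (local_error_deriv j)"
  using element_subset_patch[OF N_pos k j] node_strict_mono[OF N_pos, of "k - 1" k] j k
  by (intro H1_on_subinterval[OF local_error_H1]) auto

lemma error_deriv_H1_on_element: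
  assumes k: "1 \<le> k" "k \<le> N"
  shows "H1_on (node N (k - 1)) (node N k) (\<lambda>x. u x - approximant x) (error_deriv k)"
proof -
  have "H1_on (node N (k - 1)) (node N k)
      (\<lambda>x. (- real N * x + real k) * local_error (k - 1) x + (real N * x + (1 - real k)) * local_error k x)
      (error_deriv k)"
    unfolding error_deriv_def[abs_def] using local_error_H1_on_element[OF k]
    by (intro H1_on_add H1_on_mult_affine) auto
  then show ?thesis by (rule H1_on_cong) (rule approximation_error_on_element[OF k])
qed

lemma approximation_error_H1: "\<exists>g. H1_on 0 1 (\<lambda>x. u x - approximant x) g"
  using H1_on_upto_node[OF N_pos] error_deriv_H1_on_element N_pos by fastforce

lemma energy_norm_approximation_error_sq:
  "(energy_norm a 0 1 (\<lambda>x. u x - approximant x))^2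
     = (\<Sum>k\<in>{1..N}. integral {node N (k - 1)..node N k} (\<lambda>x. a x * (error_deriv k x)^2))"
proof -
  obtain g where g: "H1_on 0 1 (\<lambda>x. u x - approximant x) g" using approximation_error_H1 by blast
  have "(energy_norm a 0 1 (\<lambda>x. u x - approximant x))^2 = integral {0..node N N} (\<lambda>x. a x * (g x)^2)"
    using energy_norm_sq(1)[OF _ _ g] N_pos by simp
  also have "\<dots> = (\<Sum>k\<in>{1..N}. integral {node N (k - 1)..node N k} (\<lambda>x. a x * (g x)^2))"
    using weighted_square_integrable[OF _ _ H1_on_L2_on[OF g]] by (intro integral_upto_node[OF N_pos]) auto
  also have "\<dots> = (\<Sum>k\<in>{1..N}. integral {node N (k - 1)..node N k} (\<lambda>x. a x * (error_deriv k x)^2))"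
  proof (rule sum.cong[OF refl])
    fix k assume k: "k \<in> {1..N}"
    have "0 \<le> node N (k - 1)" "node N k \<le> 1" "node N (k - 1) < node N k"
      using k node_mono[OF N_pos, of 0 "k - 1"] node_mono[OF N_pos, of k N] node_strict_mono[OF N_pos, of "k - 1" k]
      by auto
    then have "H1_on (node N (k - 1)) (node N k) (\<lambda>x. u x - approximant x) g"
      by (intro H1_on_subinterval[OF g]) auto
    with error_deriv_H1_on_element k
    show "integral {node N (k - 1)..node N k} (\<lambda>x. a x * (g x)^2)
        = integral {node N (k - 1)..node N k} (\<lambda>x. a x * (error_deriv k x)^2)"
      by (auto intro: integral_weighted_square_derivative_unique)
  qed
  finally show ?thesis .
qed

definition scaled_H1_sq :: "nat \<Rightarrow> real \<Rightarrow> real \<Rightarrow> real" where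
  "scaled_H1_sq j c d = \<beta> * (real N)^2 * integral {c..d} (\<lambda>x. (local_error j x)^2)
     + integral {c..d} (\<lambda>x. a x * (local_error_deriv j x)^2)"

lemma weighted_error_deriv_on_element_le:
  assumes k: "1 \<le> k" "k \<le> N"
  shows "integral {node N (k - 1)..node N k} (\<lambda>x. a x * (error_deriv k x)^2)
    \<le> 4 * (scaled_H1_sq (k - 1) (node N (k - 1)) (node N k) + scaled_H1_sq k (node N (k - 1)) (node N k))"
proof -
  let ?c = "node N (k - 1)" and ?d = "node N k"
  let ?e = local_error and ?g = local_error_deriv and ?b = "\<beta> * (real N)^2"
  have H: "H1_on ?c ?d (?e j) (?g j)" if "j = k - 1 \<or> j = k" for j
    by (rule local_error_H1_on_element[OF k that])
  have cd: "0 \<le> ?c" "?d \<le> 1"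
    using node_mono[OF N_pos, of 0 "k - 1"] node_mono[OF N_pos, of k N] k by auto
  have e2: "(\<lambda>x. (?e j x)^2) integrable_on {?c..?d}" and g2: "(\<lambda>x. a x * (?g j x)^2) integrable_on {?c..?d}"
    if "j = k - 1 \<or> j = k" for j
    using H1_on_continuous[OF H[OF that]] weighted_square_integrable[OF cd H1_on_L2_on[OF H[OF that]]]
    by (auto intro!: integrable_continuous_interval continuous_intros)
  have bound: "((\<lambda>x. 4 * ((?b * (?e (k - 1) x)^2 + a x * (?g (k - 1) x)^2) + (?b * (?e k x)^2 + a x * (?g k x)^2)))
      has_integral 4 * (scaled_H1_sq (k - 1) ?c ?d + scaled_H1_sq k ?c ?d)) {?c..?d}"
    unfolding scaled_H1_sq_def
    by (intro has_integral_mult_right has_integral_add integrable_integral e2 g2) auto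
  have "integral {?c..?d} (\<lambda>x. a x * (error_deriv k x)^2)
      \<le> integral {?c..?d} (\<lambda>x. 4 * ((?b * (?e (k - 1) x)^2 + a x * (?g (k - 1) x)^2) + (?b * (?e k x)^2 + a x * (?g k x)^2)))"
  proof (rule integral_le_open_interval)
    show "(\<lambda>x. a x * (error_deriv k x)^2) integrable_on {?c..?d}"
      by (rule weighted_square_integrable[OF cd H1_on_L2_on[OF error_deriv_H1_on_element[OF k]]])
    show "(\<lambda>x. 4 * ((?b * (?e (k - 1) x)^2 + a x * (?g (k - 1) x)^2) + (?b * (?e k x)^2 + a x * (?g k x)^2)))
        integrable_on {?c..?d}"
      using bound by blast
    fix x assume x: "x \<in> {?c<..<?d}"
    then have "0 \<le> a x" "a x \<le> \<beta>" using a_bounds[of x] cd \<alpha>_pos by auto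
    moreover have "x \<in> {?c..?d}" using x by auto
    note hats = hat_on_element(1,2)[OF N_pos k(1) this]
      hat_nonneg[of N "k - 1" x] hat_le_one[of N "k - 1" x] hat_nonneg[of N k x] hat_le_one[of N k x]
    ultimately show "a x * (error_deriv k x)^2
        \<le> 4 * ((?b * (?e (k - 1) x)^2 + a x * (?g (k - 1) x)^2) + (?b * (?e k x)^2 + a x * (?g k x)^2))"
      unfolding error_deriv_def
      using weighted_square_hat_combination_le[of "a x" \<beta> "- real N * x + real k" "real N * x + (1 - real k)"
          "real N" "?e (k - 1) x" "?g (k - 1) x" "?e k x" "?g k x"] hats
      by (simp add: mult.assoc)
  qed
  also have "\<dots> = 4 * (scaled_H1_sq (k - 1) ?c ?d + scaled_H1_sq k ?c ?d)"
    by (rule integral_unique[OF bound])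
  finally show ?thesis .
qed

lemma scaled_H1_sq_patch_split:
  assumes j: "j \<le> N"
  shows "scaled_H1_sq j (pl j) (pr j)
    = (if 1 \<le> j then scaled_H1_sq j (node N (j - 1)) (node N j) else 0)
    + (if j + 1 \<le> N then scaled_H1_sq j (node N j) (node N (j + 1)) else 0)"
proof -
  have H: "H1_on (pl j) (pr j) (local_error j) (local_error_deriv j)" by (rule local_error_H1[OF j])
  have e2: "(\<lambda>x. (local_error j x)^2) integrable_on {pl j..pr j}"
    by (intro integrable_continuous_interval continuous_intros H1_on_continuous[OF H])
  have g2: "(\<lambda>x. a x * (local_error_deriv j x)^2) integrable_on {pl j..pr j}"
    using patch_bounds[OF j] by (intro weighted_square_integrable H1_on_L2_on[OF H])
  show ?thesis
    unfolding scaled_H1_sq_def integral_patch_split[OF N_pos j e2] integral_patch_split[OF N_pos j g2]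
    by (auto simp: algebra_simps)
qed

lemma sum_elements_eq_sum_patches:
  "(\<Sum>k\<in>{1..N}. scaled_H1_sq (k - 1) (node N (k - 1)) (node N k) + scaled_H1_sq k (node N (k - 1)) (node N k))
     = (\<Sum>j\<in>{0..N}. scaled_H1_sq j (pl j) (pr j))"
proof -
  let ?S = scaled_H1_sq
  have left: "(\<Sum>j\<in>{0..N}. if 1 \<le> j then ?S j (node N (j - 1)) (node N j) else 0)
      = (\<Sum>k\<in>{1..N}. ?S k (node N (k - 1)) (node N k))"
    by (simp add: sum.If_cases Int_def atLeastAtMost_def conj_commute)
  have "(\<Sum>j\<in>{0..N}. if j + 1 \<le> N then ?S j (node N j) (node N (j + 1)) else 0)
      = (\<Sum>j\<in>{0..N - 1}. ?S j (node N j) (node N (j + 1)))"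
    using N_pos by (intro sum.mono_neutral_cong_right) auto
  also have "\<dots> = (\<Sum>k\<in>{1..N}. ?S (k - 1) (node N (k - 1)) (node N k))"
    using N_pos sum.shift_bounds_cl_nat_ivl[of "\<lambda>k. ?S (k - 1) (node N (k - 1)) (node N k)" 0 1 "N - 1"]
    by simp
  finally have right: "(\<Sum>j\<in>{0..N}. if j + 1 \<le> N then ?S j (node N j) (node N (j + 1)) else 0)
      = (\<Sum>k\<in>{1..N}. ?S (k - 1) (node N (k - 1)) (node N k))" .
  have "(\<Sum>j\<in>{0..N}. ?S j (pl j) (pr j))
      = (\<Sum>j\<in>{0..N}. (if 1 \<le> j then ?S j (node N (j - 1)) (node N j) else 0)
          + (if j + 1 \<le> N then ?S j (node N j) (node N (j + 1)) else 0))"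
    by (rule sum.cong) (simp_all add: scaled_H1_sq_patch_split)
  then show ?thesis
    unfolding sum.distrib left right by (simp add: add.commute)
qed

lemma local_error_left_zero:
  assumes j: "j \<le> N" and not_enriched: "j \<notin> enriched"
  shows "local_error j (pl j) = 0"
proof -
  define k where "k = max 1 j"
  have k: "1 \<le> k" "k \<le> N" and jk: "j = k - 1 \<or> j = k" using j N_pos by (auto simp: k_def)
  have pl: "pl j = node N (k - 1)" by (auto simp: k_def patch_l_eq max_def)
  have x: "pl j \<in> {node N (k - 1)..node N k}"
    unfolding pl using node_mono[OF N_pos, of "k - 1" k] by auto
  have "real N * node N (k - 1) = real k - 1"
    using N_pos k by (simp add: node_def of_nat_diff)
  then have "hat N k (pl j) = 0" "hat N (k - 1) (pl j) = 1"
    using hat_on_element(1,2)[OF N_pos k(1) x] unfolding pl by simp_all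
  then have "patch_interp N j u (pl j) = u (pl j)"
    using patch_interp_on_element[OF N_pos k x jk, of u] pl by simp
  then show ?thesis using not_enriched by (simp add: local_error_def enrichment_def)
qed

lemma local_error_L2_le_diameter:
  assumes j: "j \<le> N"
  shows "integral {pl j..pr j} (\<lambda>x. (local_error j x)^2)
    \<le> (pr j - pl j)^2 * (C\<^sub>1^2 * (local_energy j)^2 + (local_energy j)^2 / \<alpha>)"
proof (cases "j \<in> enriched")
  case True
  then have "sqrt (integral {pl j..pr j} (\<lambda>x. (local_error j x)^2)) \<le> C\<^sub>1 * (pr j - pl j) * local_energy j"
    using \<xi>_L2_bound[OF True]
    unfolding L2_norm_def local_energy_def local_error_def[abs_def] enrichment_def by simp
  then have "integral {pl j..pr j} (\<lambda>x. (local_error j x)^2) \<le> (pr j - pl j)^2 * (C\<^sub>1^2 * (local_energy j)^2)"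
    by (auto dest: sqrt_le_D simp: power_mult_distrib mult_ac)
  moreover have "0 \<le> (pr j - pl j)^2 * ((local_energy j)^2 / \<alpha>)" using \<alpha>_pos by simp
  ultimately show ?thesis unfolding distrib_left by linarith
next
  case False
  have H: "H1_on (pl j) (pr j) (local_error j) (local_error_deriv j)" by (rule local_error_H1[OF j])
  have "integral {pl j..pr j} (\<lambda>x. (local_error j x)^2)
      \<le> (pr j - pl j)^2 * integral {pl j..pr j} (\<lambda>x. (local_error_deriv j x)^2)"
    by (rule poincare_left_zero[OF H local_error_left_zero[OF j False]])
  also have "\<dots> \<le> (pr j - pl j)^2 * ((local_energy j)^2 / \<alpha>)"
    using integral_square_le_energy[OF _ _ H1_on_L2_on[OF H]] patch_bounds[OF j] local_energy_sq[OF j]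
    by (intro mult_left_mono) auto
  moreover have "0 \<le> (pr j - pl j)^2 * (C\<^sub>1^2 * (local_energy j)^2)" by simp
  ultimately show ?thesis unfolding distrib_left by linarith
qed

lemma local_error_L2_le:
  assumes j: "j \<le> N"
  shows "(real N)^2 * integral {pl j..pr j} (\<lambda>x. (local_error j x)^2) \<le> 4 * (C\<^sub>1^2 + 1 / \<alpha>) * (local_energy j)^2"
proof -
  have "real N * (pr j - pl j) \<le> 2"
    using patch_diameter_le[OF N_pos j] N_pos by (simp add: field_simps)
  then have N2: "(real N)^2 * (pr j - pl j)^2 \<le> 4"
    using power_mono[of "real N * (pr j - pl j)" 2 2] patch_bounds(3)[OF j]
    by (simp add: power_mult_distrib)
  have "(real N)^2 * integral {pl j..pr j} (\<lambda>x. (local_error j x)^2)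
      \<le> ((real N)^2 * (pr j - pl j)^2) * (C\<^sub>1^2 * (local_energy j)^2 + (local_energy j)^2 / \<alpha>)"
    using local_error_L2_le_diameter[OF j] by (simp add: mult_left_mono mult.assoc)
  also have "\<dots> \<le> 4 * (C\<^sub>1^2 * (local_energy j)^2 + (local_energy j)^2 / \<alpha>)"
    using N2 \<alpha>_pos by (intro mult_right_mono) auto
  finally show ?thesis by (simp add: algebra_simps)
qed

lemma scaled_H1_sq_patch_le:
  assumes j: "j \<le> N"
  shows "scaled_H1_sq j (pl j) (pr j) \<le> (1 + 4 * \<beta> * (C\<^sub>1^2 + 1 / \<alpha>)) * (local_energy j)^2"
proof -
  have "\<beta> * ((real N)^2 * integral {pl j..pr j} (\<lambda>x. (local_error j x)^2))
      \<le> \<beta> * (4 * (C\<^sub>1^2 + 1 / \<alpha>) * (local_energy j)^2)"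
    using local_error_L2_le[OF j] \<alpha>_pos \<alpha>_le_\<beta> by (intro mult_left_mono) auto
  then show ?thesis
    unfolding scaled_H1_sq_def local_energy_sq[OF j, symmetric] by (simp add: algebra_simps)
qed

lemma sum_local_energy_sq_le:
  "(\<Sum>j\<in>{0..N}. (local_energy j)^2)
     \<le> (\<Sum>i\<in>{0..N} - enriched. (energy_norm a (pl i) (pr i) (\<lambda>x. u x - patch_interp N i u x))^2)
       + (\<Sum>i\<in>enriched. (\<epsilon> i)^2)"
proof -
  have "(\<Sum>j\<in>{0..N}. (local_energy j)^2)
      = (\<Sum>j\<in>{0..N} - enriched. (local_energy j)^2) + (\<Sum>j\<in>enriched. (local_energy j)^2)"
    by (rule sum.subset_diff[OF enriched_subset]) simp
  moreover have "(\<Sum>j\<in>{0..N} - enriched. (local_energy j)^2)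
      = (\<Sum>i\<in>{0..N} - enriched. (energy_norm a (pl i) (pr i) (\<lambda>x. u x - patch_interp N i u x))^2)"
    by (rule sum.cong) (auto simp: local_energy_def local_error_def[abs_def] enrichment_def)
  moreover have "(\<Sum>j\<in>enriched. (local_energy j)^2) \<le> (\<Sum>i\<in>enriched. (\<epsilon> i)^2)"
  proof (rule sum_mono)
    fix i assume i: "i \<in> enriched"
    have "local_energy i \<le> \<epsilon> i"
      using \<xi>_energy_bound[OF i] i unfolding local_energy_def local_error_def enrichment_def by simp
    then show "(local_energy i)^2 \<le> (\<epsilon> i)^2"
      by (rule power_mono) (use local_energy_nonneg i enriched_subset in auto)
  qed
  ultimately show ?thesis by linarith
qed

theorem energy_approximation_error_le:
  "energy_norm a 0 1 (\<lambda>x. u x - approximant x)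
     \<le> 2 * sqrt (1 + 4 * \<beta> * (C\<^sub>1^2 + 1 / \<alpha>)) *
       sqrt ((\<Sum>i\<in>{0..N} - enriched. (energy_norm a (pl i) (pr i) (\<lambda>x. u x - patch_interp N i u x))^2)
             + (\<Sum>i\<in>enriched. (\<epsilon> i)^2))"
    (is "_ \<le> 2 * sqrt ?K * sqrt ?S")
proof -
  have K: "0 \<le> ?K" using \<alpha>_pos \<alpha>_le_\<beta> by simp
  have "(energy_norm a 0 1 (\<lambda>x. u x - approximant x))^2
      \<le> (\<Sum>k\<in>{1..N}. 4 * (scaled_H1_sq (k - 1) (node N (k - 1)) (node N k)
                            + scaled_H1_sq k (node N (k - 1)) (node N k)))"
    unfolding energy_norm_approximation_error_sq
    by (intro sum_mono weighted_error_deriv_on_element_le) auto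
  also have "\<dots> = 4 * (\<Sum>j\<in>{0..N}. scaled_H1_sq j (pl j) (pr j))"
    unfolding sum_elements_eq_sum_patches[symmetric] sum_distrib_left ..
  also have "\<dots> \<le> 4 * (\<Sum>j\<in>{0..N}. ?K * (local_energy j)^2)"
    by (intro mult_left_mono sum_mono scaled_H1_sq_patch_le) auto
  also have "\<dots> \<le> 4 * (?K * ?S)"
    using sum_local_energy_sq_le K by (simp add: sum_distrib_left[symmetric] mult_left_mono)
  finally have "energy_norm a 0 1 (\<lambda>x. u x - approximant x) \<le> sqrt (4 * (?K * ?S))"
    using energy_norm_sq(2)[OF _ _ approximation_error_H1[THEN someI_ex]] by (simp add: real_le_rsqrt)
  also have "\<dots> = 2 * sqrt ?K * sqrt ?S"
    by (simp add: real_sqrt_mult real_sqrt_four)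
  finally show ?thesis .
qed

end

theorem mainTheorem1:
  fixes \<alpha> \<beta> C\<^sub>1 :: real
  assumes "0 < \<alpha>" and "\<alpha> \<le> \<beta>" and "0 < C\<^sub>1"
  shows "\<exists>C::real. \<forall>(N::nat) (a::real \<Rightarrow> real) (u::real \<Rightarrow> real) (n::nat \<Rightarrow> nat)
           (\<phi>::nat \<Rightarrow> nat \<Rightarrow> real \<Rightarrow> real) (\<xi>::nat \<Rightarrow> real \<Rightarrow> real) (\<epsilon>::nat \<Rightarrow> real).
    1 \<le> N \<and>
    a measurable_on {0..1} \<and> (\<forall>x\<in>{0<..<1}. \<alpha> \<le> a x \<and> a x \<le> \<beta>) \<and>
    (\<exists>g. H1_on 0 1 u g) \<and> u 0 = 0 \<and>
    (\<forall>i\<le>N. \<forall>j\<le>n i. \<exists>g. H1_on (patch_l N i) (patch_r N i) (\<phi> i j) g) \<and>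
    (\<forall>i\<in>T2 N \<phi> n.
       \<xi> i \<in> Vbar N \<phi> n i \<and> 0 \<le> \<epsilon> i \<and>
       L2_norm (patch_l N i) (patch_r N i) (\<lambda>x. u x - patch_interp N i u x - \<xi> i x)
         \<le> C\<^sub>1 * (patch_r N i - patch_l N i) *
           energy_norm a (patch_l N i) (patch_r N i) (\<lambda>x. u x - patch_interp N i u x - \<xi> i x) \<and>
       energy_norm a (patch_l N i) (patch_r N i) (\<lambda>x. u x - patch_interp N i u x - \<xi> i x) \<le> \<epsilon> i)
    \<longrightarrow> (\<exists>v. in_S N \<phi> n v \<and> (\<exists>g. H1_on 0 1 (\<lambda>x. u x - v x) g) \<and>
          energy_norm a 0 1 (\<lambda>x. u x - v x)
            \<le> C * sqrt ((\<Sum>i\<in>{0..N} - T2 N \<phi> n.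
                           (energy_norm a (patch_l N i) (patch_r N i) (\<lambda>x. u x - patch_interp N i u x))^2)
                        + (\<Sum>i\<in>T2 N \<phi> n. (\<epsilon> i)^2)))"
proof (intro exI[of _ "2 * sqrt (1 + 4 * \<beta> * (C\<^sub>1^2 + 1 / \<alpha>))"] allI impI, elim conjE)
  fix N a u n \<phi> \<xi> \<epsilon>
  assume "1 \<le> N" "a measurable_on {0..1}" "\<forall>x\<in>{0<..<1}. \<alpha> \<le> a x \<and> a x \<le> \<beta>"
    "\<exists>g. H1_on 0 1 u g" "u 0 = 0" "\<forall>i\<le>N. \<forall>j\<le>n i. \<exists>g. H1_on (patch_l N i) (patch_r N i) (\<phi> i j) g"
    "\<forall>i\<in>T2 N \<phi> n.
       \<xi> i \<in> Vbar N \<phi> n i \<and> 0 \<le> \<epsilon> i \<and>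
       L2_norm (patch_l N i) (patch_r N i) (\<lambda>x. u x - patch_interp N i u x - \<xi> i x)
         \<le> C\<^sub>1 * (patch_r N i - patch_l N i) *
           energy_norm a (patch_l N i) (patch_r N i) (\<lambda>x. u x - patch_interp N i u x - \<xi> i x) \<and>
       energy_norm a (patch_l N i) (patch_r N i) (\<lambda>x. u x - patch_interp N i u x - \<xi> i x) \<le> \<epsilon> i"
  then interpret enriched_patch_approximation a \<alpha> \<beta> N u n \<phi> \<xi> \<epsilon> C\<^sub>1
    using assms(1) by unfold_locales (auto simp: measurable_on_iff_borel_measurable)
  show "\<exists>v. in_S N \<phi> n v \<and> (\<exists>g. H1_on 0 1 (\<lambda>x. u x - v x) g) \<and>
      energy_norm a 0 1 (\<lambda>x. u x - v x)
        \<le> 2 * sqrt (1 + 4 * \<beta> * (C\<^sub>1^2 + 1 / \<alpha>)) *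
          sqrt ((\<Sum>i\<in>{0..N} - T2 N \<phi> n.
                   (energy_norm a (patch_l N i) (patch_r N i) (\<lambda>x. u x - patch_interp N i u x))^2)
                + (\<Sum>i\<in>T2 N \<phi> n. (\<epsilon> i)^2))"
    using approximant_in_S approximation_error_H1 energy_approximation_error_le by blast
qed

end
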